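(* Let $X$ be a compact metrizable space and let $\Delta$ be a closed set of Borel probability measures on $X$. The C*-algebra $\ell^\infty(\mathrm{C}(X))/J_{2,\omega,\Delta}$ has real rank zero if, and only if, $(X,\Delta)$ has the small boundary property.
   Context: "Closed" refers to the weak* topology; measures $\mu$ act as traces $\tau_\mu(f)=\int f\,d\mu$. $\omega$ is a free ultrafilter on $\mathbb N$ and $J_{2,\omega,\Delta}=\{(f_n)\in\ell^\infty(\mathrm{C}(X)):\lim_{n\to\omega}\sup_{\tau\in\Delta}\tau(|f_n|^2)=0\}$. A unital C*-algebra has real rank zero if its invertible self-adjoint elements are norm-dense in its self-adjoint elements. $(X,\Delta)$ has the small boundary property if for every $x\in X$ and every open $U\ni x$ there is an open neighbourhood $V\subseteq U$ of $x$ with $\mu(\partial V)=0$ for all $\mu\in\Delta$. *)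

theory Defs
  imports "HOL-Analysis.Analysis" "HOL-Probability.Probability"
begin

definition borel_prob :: "'a::metric_space measure \<Rightarrow> bool" where
  "borel_prob M \<longleftrightarrow> sets M = sets borel \<and> prob_space M"

text \<open>Delta is closed in the weak* topology (measures act as traces f |-> integral of f).
  A measure is in the weak* closure of Delta iff every basic weak* neighbourhood of it meets Delta.\<close>
definition weak_star_closed :: "'a::metric_space measure set \<Rightarrow> bool" where
  "weak_star_closed \<Delta> \<longleftrightarrow>
     (\<forall>\<mu>. borel_prob \<mu> \<and>
        (\<forall>F \<epsilon>. finite F \<and> (\<forall>f\<in>F. continuous_on UNIV (f :: 'a \<Rightarrow> complex)) \<and> \<epsilon> > 0 \<longrightarrow>
           (\<exists>\<nu>\<in>\<Delta>. \<forall>f\<in>F. cmod (integral\<^sup>L \<mu> f - integral\<^sup>L \<nu> f) < \<epsilon>))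
      \<longrightarrow> \<mu> \<in> \<Delta>)"

definition free_ultrafilter :: "nat filter \<Rightarrow> bool" where
  "free_ultrafilter \<omega> \<longleftrightarrow> \<omega> \<noteq> bot \<and>
     (\<forall>P. eventually P \<omega> \<or> eventually (\<lambda>n. \<not> P n) \<omega>) \<and>
     (\<forall>k. eventually (\<lambda>n. n \<noteq> k) \<omega>)"

definition ell_inf :: "(nat \<Rightarrow> 'a::topological_space \<Rightarrow> complex) set" where
  "ell_inf = {f. (\<forall>n. continuous_on UNIV (f n)) \<and> (\<exists>B. \<forall>n x. cmod (f n x) \<le> B)}"

definition ell_norm :: "(nat \<Rightarrow> 'a \<Rightarrow> complex) \<Rightarrow> real" where
  "ell_norm f = (SUP n. SUP x. cmod (f n x))"

definition trace_sup :: "'a measure set \<Rightarrow> ('a \<Rightarrow> real) \<Rightarrow> real" where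
  "trace_sup \<Delta> g = (if \<Delta> = {} then 0 else (SUP \<mu>\<in>\<Delta>. integral\<^sup>L \<mu> g))"

definition J2 :: "nat filter \<Rightarrow> 'a::topological_space measure set \<Rightarrow> (nat \<Rightarrow> 'a \<Rightarrow> complex) set" where
  "J2 \<omega> \<Delta> = {f \<in> ell_inf. ((\<lambda>n. trace_sup \<Delta> (\<lambda>x. (cmod (f n x))\<^sup>2)) \<longlongrightarrow> 0) \<omega>}"

definition quot_norm :: "(nat \<Rightarrow> 'a \<Rightarrow> complex) set \<Rightarrow> (nat \<Rightarrow> 'a \<Rightarrow> complex) \<Rightarrow> real" where
  "quot_norm J f = (INF j\<in>J. ell_norm (\<lambda>n x. f n x - j n x))"

definition quot_selfadj :: "(nat \<Rightarrow> 'a \<Rightarrow> complex) set \<Rightarrow> (nat \<Rightarrow> 'a \<Rightarrow> complex) \<Rightarrow> bool" where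
  "quot_selfadj J a \<longleftrightarrow> (\<lambda>n x. a n x - cnj (a n x)) \<in> J"

definition quot_invertible :: "(nat \<Rightarrow> 'a::topological_space \<Rightarrow> complex) set \<Rightarrow> (nat \<Rightarrow> 'a \<Rightarrow> complex) \<Rightarrow> bool" where
  "quot_invertible J a \<longleftrightarrow> (\<exists>b\<in>ell_inf. (\<lambda>n x. a n x * b n x - 1) \<in> J \<and> (\<lambda>n x. b n x * a n x - 1) \<in> J)"

text \<open>Real rank zero of ell^infty(C(X))/J: invertible self-adjoint elements are norm-dense
  among self-adjoint elements.\<close>
definition quot_real_rank_zero :: "(nat \<Rightarrow> 'a::topological_space \<Rightarrow> complex) set \<Rightarrow> bool" where
  "quot_real_rank_zero J \<longleftrightarrow>
     (\<forall>a\<in>ell_inf. quot_selfadj J a \<longrightarrow>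
        (\<forall>\<epsilon>>0. \<exists>c\<in>ell_inf. quot_selfadj J c \<and> quot_invertible J c \<and>
                  quot_norm J (\<lambda>n x. a n x - c n x) < \<epsilon>))"

definition small_boundary_property :: "'a::topological_space measure set \<Rightarrow> bool" where
  "small_boundary_property \<Delta> \<longleftrightarrow>
     (\<forall>x U. open U \<and> x \<in> U \<longrightarrow>
        (\<exists>V. open V \<and> x \<in> V \<and> V \<subseteq> U \<and> (\<forall>\<mu>\<in>\<Delta>. measure \<mu> (frontier V) = 0)))"

end

theory Submission
  imports Defs
begin

text \<open>
  Both directions go through approximating continuous real functions uniformly by functions
  whose near-zero sets are uniformly small for all measures in Delta.

  If Delta has the small boundary property and a = (a_n) is self-adjoint modulo J, choose for
  each n an open W between {Re a_n \<ge> 0} and {Re a_n > -e/4} with Delta-null boundary, and push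
  Re a_n away from zero except near the boundary of W. Weak* compactness of Delta makes that
  neighbourhood uniformly small, giving real c_n within e/2 of Re a_n with
  mu {|c_n| < e/4} \<le> 1/(n+1) for all mu in Delta. The truncated inverses c_n / max (c_n^2, (e/4)^2)
  then invert c modulo J.

  Conversely, approximate the constant sequence g, up to some j in J and a uniformly small error,
  by a self-adjoint c that is invertible modulo J with inverse b. Where |Re (c_n + j_n)| is below
  1/(2 sup|b|), one of the defects c_n - c_n^*, j_n, c_n b_n - 1, whose L2 norms tend to 0 along
  omega, is of size about 1/sup|b|; so by Chebyshev Re (c_n + j_n) is a continuous function near g
  with uniformly small near-zero set. Iterating with geometrically shrinking errors yields a
  uniform limit G near g with Delta-null zero set, and the sets {G > 0} are neighbourhoods with
  null boundaries.
\<close>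

section \<open>Borel probability measures and free ultrafilters\<close>

lemma borel_prob_sets: "borel_prob M \<Longrightarrow> sets M = sets borel"
  by (simp add: borel_prob_def)

lemma borel_prob_space: "borel_prob M \<Longrightarrow> space M = UNIV"
  using sets_eq_imp_space_eq[OF borel_prob_sets[of M]] by simp

lemma borel_prob_prob_space: "borel_prob M \<Longrightarrow> prob_space M"
  by (simp add: borel_prob_def)

lemma borel_prob_measurable_continuous:
  "borel_prob M \<Longrightarrow> continuous_on UNIV f \<Longrightarrow> f \<in> borel_measurable M"
  using measurable_cong_sets[OF borel_prob_sets[of M] refl] borel_measurable_continuous_onI by blast

lemma borel_prob_closed_sets: "borel_prob M \<Longrightarrow> closed S \<Longrightarrow> S \<in> sets M"
  using borel_prob_sets borel_closed by blast

lemma borel_prob_sets_Collect_less: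
  "borel_prob M \<Longrightarrow> continuous_on UNIV (g::'a::metric_space \<Rightarrow> real) \<Longrightarrow> {x. g x < c} \<in> sets M"
  using borel_prob_sets borel_open[OF open_Collect_less[OF _ continuous_on_const]] by blast

lemma borel_prob_sets_Collect_eq:
  "borel_prob M \<Longrightarrow> continuous_on UNIV (g::'a::metric_space \<Rightarrow> real) \<Longrightarrow> {x. g x = c} \<in> sets M"
  using borel_prob_closed_sets closed_Collect_eq[OF _ continuous_on_const] by blast

lemma compact_UNIV_continuous_bounded:
  fixes f :: "'a::metric_space \<Rightarrow> 'b::real_normed_vector"
  assumes "compact (UNIV::'a set)" "continuous_on UNIV f"
  obtains B where "\<And>x. norm (f x) \<le> B"
  using compact_imp_bounded[OF compact_continuous_image[OF assms(2,1)]]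
  unfolding bounded_iff by blast

lemma borel_prob_integrable_continuous:
  fixes f :: "'a::metric_space \<Rightarrow> 'b::{banach, second_countable_topology}"
  assumes "compact (UNIV :: 'a set)" and M: "borel_prob M" and f: "continuous_on UNIV f"
  shows "integrable M f"
proof -
  interpret prob_space M using M borel_prob_prob_space by blast
  obtain B where "\<And>x. norm (f x) \<le> B" using compact_UNIV_continuous_bounded assms(1) f by blast
  then show ?thesis
    by (intro integrable_const_bound[where B=B]) (use borel_prob_measurable_continuous[OF M f] in auto)
qed

lemma borel_prob_measure_Collect_le_integral:
  fixes g :: "'a::metric_space \<Rightarrow> real"
  assumes "compact (UNIV :: 'a set)" and M: "borel_prob M"
    and S: "S \<in> sets M" and g: "continuous_on UNIV g" and le: "\<And>x. x \<in> S \<Longrightarrow> 1 \<le> g x"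
    and nonneg: "\<And>x. 0 \<le> g x"
  shows "measure M S \<le> integral\<^sup>L M g"
proof -
  interpret prob_space M using M borel_prob_prob_space by blast
  have "measure M S = integral\<^sup>L M (indicator S)" using S by simp
  also have "\<dots> \<le> integral\<^sup>L M g"
    by (rule integral_mono)
      (use S borel_prob_integrable_continuous[OF assms(1) M g] le nonneg in
        \<open>auto simp: emeasure_finite top.not_eq_extremum[symmetric] indicator_def\<close>)
  finally show ?thesis .
qed

lemma free_ultrafilter_not_bot: "free_ultrafilter \<omega> \<Longrightarrow> \<omega> \<noteq> bot"
  unfolding free_ultrafilter_def by auto

lemma free_ultrafilter_le_sequentially:
  assumes "free_ultrafilter \<omega>"
  shows "\<omega> \<le> sequentially"
proof -
  have avoid: "eventually (\<lambda>n. n \<noteq> k) \<omega>" for k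
    using assms unfolding free_ultrafilter_def by auto
  have "eventually (\<lambda>n. N \<le> n) \<omega>" for N
  proof (induction N)
    case (Suc N)
    from eventually_conj[OF Suc avoid[of N]] show ?case
      by (rule eventually_mono) auto
  qed simp
  then show ?thesis
    unfolding le_filter_def eventually_sequentially by (metis (mono_tags, lifting) eventually_mono)
qed

lemma free_ultrafilter_tendsto_Lim:
  fixes s :: "nat \<Rightarrow> real"
  assumes "free_ultrafilter \<omega>" and bounded: "\<And>k. \<bar>s k\<bar> \<le> B"
  shows "(s \<longlongrightarrow> Lim \<omega> s) \<omega>"
proof -
  have proper: "\<omega> \<noteq> bot" and ultra: "\<And>P. eventually P \<omega> \<or> eventually (\<lambda>n. \<not> P n) \<omega>"
    using assms(1) unfolding free_ultrafilter_def by auto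
  have "eventually (\<lambda>x. x \<in> {-B..B}) (filtermap s \<omega>)"
    unfolding eventually_filtermap using bounded by (auto intro!: always_eventually simp: abs_le_iff)
      (metis minus_le_iff)
  moreover have "filtermap s \<omega> \<noteq> bot" using proper by (simp add: filtermap_bot_iff)
  ultimately obtain l where l: "nhds l \<sqinter> filtermap s \<omega> \<noteq> bot"
    using compact_Icc[of "-B" B] unfolding compact_filter by blast
  have "(s \<longlongrightarrow> l) \<omega>"
    unfolding tendsto_def
  proof (intro allI impI)
    fix S assume S: "open S" "l \<in> S"
    show "eventually (\<lambda>k. s k \<in> S) \<omega>"
    proof (rule ccontr)
      assume "\<not> eventually (\<lambda>k. s k \<in> S) \<omega>"
      then have "eventually (\<lambda>k. s k \<notin> S) \<omega>" using ultra[of "\<lambda>k. s k \<in> S"] by auto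
      moreover have "eventually (\<lambda>x. x \<in> S) (nhds l)" using S eventually_nhds by blast
      ultimately have "eventually (\<lambda>x. False) (nhds l \<sqinter> filtermap s \<omega>)"
        unfolding eventually_inf eventually_filtermap by (intro exI[of _ "\<lambda>x. x \<in> S"] exI[of _ "\<lambda>x. x \<notin> S"]) auto
      then show False using l by (simp add: eventually_False)
    qed
  qed
  then show ?thesis using tendsto_Lim[OF proper] by metis
qed

lemma free_ultrafilter_tendsto_inverse_Suc:
  "free_ultrafilter \<omega> \<Longrightarrow> ((\<lambda>n. 1 / (real n + 1)) \<longlongrightarrow> 0) \<omega>"
  using filterlim_mono[OF LIMSEQ_inverse_real_of_nat order_refl free_ultrafilter_le_sequentially]
  by (simp add: inverse_eq_divide add.commute)

section \<open>The trace seminorm and the quotient algebra\<close>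

lemma integral_le_trace_sup:
  fixes \<Delta> :: "'a::metric_space measure set" and g :: "'a \<Rightarrow> real"
  assumes cpt: "compact (UNIV::'a set)" and \<Delta>: "\<forall>\<mu>\<in>\<Delta>. borel_prob \<mu>" and g: "continuous_on UNIV g"
    and "\<mu> \<in> \<Delta>"
  shows "integral\<^sup>L \<mu> g \<le> trace_sup \<Delta> g"
proof -
  obtain B where B: "\<And>x. norm (g x) \<le> B" using compact_UNIV_continuous_bounded[OF cpt g] by blast
  have "integral\<^sup>L \<nu> g \<le> B" if "\<nu> \<in> \<Delta>" for \<nu>
  proof -
    have \<nu>: "borel_prob \<nu>" using \<Delta> that by blast
    interpret prob_space \<nu> using \<nu> borel_prob_prob_space by blast
    have "integral\<^sup>L \<nu> g \<le> integral\<^sup>L \<nu> (\<lambda>_. B)"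
      using borel_prob_integrable_continuous[OF cpt \<nu> g] B
      by (intro integral_mono) (auto simp: abs_le_iff)
    then show ?thesis by (simp add: prob_space)
  qed
  then have "bdd_above ((\<lambda>\<nu>. integral\<^sup>L \<nu> g) ` \<Delta>)" by (intro bdd_aboveI2)
  then show ?thesis unfolding trace_sup_def using \<open>\<mu> \<in> \<Delta>\<close> by (auto intro: cSUP_upper)
qed

lemma trace_sup_le:
  assumes "\<And>\<mu>. \<mu> \<in> \<Delta> \<Longrightarrow> integral\<^sup>L \<mu> g \<le> c" and "0 \<le> c"
  shows "trace_sup \<Delta> g \<le> c"
  unfolding trace_sup_def using assms by (auto intro!: cSUP_least)

lemma trace_sup_nonneg:
  fixes \<Delta> :: "'a::metric_space measure set" and g :: "'a \<Rightarrow> real"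
  assumes cpt: "compact (UNIV::'a set)" and \<Delta>: "\<forall>\<mu>\<in>\<Delta>. borel_prob \<mu>" and g: "continuous_on UNIV g"
    and nonneg: "\<And>x. 0 \<le> g x"
  shows "0 \<le> trace_sup \<Delta> g"
proof (cases "\<Delta> = {}")
  case False
  then obtain \<mu> where "\<mu> \<in> \<Delta>" by blast
  have "0 \<le> integral\<^sup>L \<mu> g" by (simp add: nonneg)
  also have "\<dots> \<le> trace_sup \<Delta> g" by (rule integral_le_trace_sup[OF cpt \<Delta> g \<open>\<mu> \<in> \<Delta>\<close>])
  finally show ?thesis .
qed (simp add: trace_sup_def)

lemma trace_sup_mono:
  fixes \<Delta> :: "'a::metric_space measure set" and g h :: "'a \<Rightarrow> real"
  assumes cpt: "compact (UNIV::'a set)" and \<Delta>: "\<forall>\<mu>\<in>\<Delta>. borel_prob \<mu>"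
    and g: "continuous_on UNIV g" and h: "continuous_on UNIV h"
    and nonneg: "\<And>x. 0 \<le> g x" and le: "\<And>x. g x \<le> h x"
  shows "trace_sup \<Delta> g \<le> trace_sup \<Delta> h"
proof (rule trace_sup_le)
  show "0 \<le> trace_sup \<Delta> h"
    using trace_sup_nonneg[OF cpt \<Delta> h] nonneg le by (meson order_trans)
  fix \<mu> assume "\<mu> \<in> \<Delta>"
  then have \<mu>: "borel_prob \<mu>" using \<Delta> by blast
  have "integral\<^sup>L \<mu> g \<le> integral\<^sup>L \<mu> h"
    using borel_prob_integrable_continuous[OF cpt \<mu> g] borel_prob_integrable_continuous[OF cpt \<mu> h] le
    by (rule integral_mono)
  also have "\<dots> \<le> trace_sup \<Delta> h" by (rule integral_le_trace_sup[OF cpt \<Delta> h \<open>\<mu> \<in> \<Delta>\<close>])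
  finally show "integral\<^sup>L \<mu> g \<le> trace_sup \<Delta> h" .
qed

lemma ell_infI: "(\<And>n. continuous_on UNIV (f n)) \<Longrightarrow> (\<And>n x. cmod (f n x) \<le> B) \<Longrightarrow> f \<in> ell_inf"
  unfolding ell_inf_def by blast

lemma ell_inf_continuous: "f \<in> ell_inf \<Longrightarrow> continuous_on UNIV (f n)"
  unfolding ell_inf_def by blast

lemma ell_inf_bounded:
  assumes "f \<in> ell_inf"
  obtains B where "\<And>n x. cmod (f n x) \<le> B"
  using assms unfolding ell_inf_def by blast

lemma norm_le_ell_norm:
  assumes bounded: "\<And>n x. cmod (f n x) \<le> B"
  shows "cmod (f n x) \<le> ell_norm f"
proof -
  have "bdd_above (range (\<lambda>x. cmod (f m x)))" for m by (rule bdd_aboveI2) (rule bounded)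
  moreover have "bdd_above (range (\<lambda>m. SUP x. cmod (f m x)))"
    by (rule bdd_aboveI2) (rule cSUP_least, auto intro: bounded)
  ultimately show ?thesis
    unfolding ell_norm_def by (meson UNIV_I cSUP_upper order_trans)
qed

lemma ell_norm_le: "(\<And>n x. cmod (f n x) \<le> B) \<Longrightarrow> ell_norm f \<le> B"
  unfolding ell_norm_def by (intro cSUP_least) auto

lemma zero_in_J2: "(\<lambda>n x. 0) \<in> J2 \<omega> \<Delta>"
  by (auto simp: J2_def trace_sup_def intro: ell_infI[where B=0])

lemma J2_imp_ell_inf: "f \<in> J2 \<omega> \<Delta> \<Longrightarrow> f \<in> ell_inf"
  by (simp add: J2_def)

lemma J2_tendsto: "f \<in> J2 \<omega> \<Delta> \<Longrightarrow> ((\<lambda>n. trace_sup \<Delta> (\<lambda>x. (cmod (f n x))\<^sup>2)) \<longlongrightarrow> 0) \<omega>"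
  by (simp add: J2_def)

lemma J2I:
  fixes \<Delta> :: "'a::metric_space measure set"
  assumes cpt: "compact (UNIV::'a set)" and \<Delta>: "\<forall>\<mu>\<in>\<Delta>. borel_prob \<mu>"
    and f: "f \<in> ell_inf" and le: "\<And>n. trace_sup \<Delta> (\<lambda>x. (cmod (f n x))\<^sup>2) \<le> t n"
    and t: "(t \<longlongrightarrow> 0) \<omega>"
  shows "f \<in> J2 \<omega> \<Delta>"
proof -
  have "0 \<le> trace_sup \<Delta> (\<lambda>x. (cmod (f n x))\<^sup>2)" for n
    by (rule trace_sup_nonneg[OF cpt \<Delta>]) (auto intro!: continuous_intros ell_inf_continuous[OF f])
  then have "((\<lambda>n. trace_sup \<Delta> (\<lambda>x. (cmod (f n x))\<^sup>2)) \<longlongrightarrow> 0) \<omega>"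
    by (intro tendsto_sandwich[OF _ _ tendsto_const t] always_eventually allI le)
  with f show ?thesis by (simp add: J2_def)
qed

lemma quot_norm_le:
  assumes f: "f \<in> ell_inf" and j: "j \<in> J2 \<omega> \<Delta>"
  shows "quot_norm (J2 \<omega> \<Delta>) f \<le> ell_norm (\<lambda>n x. f n x - j n x)"
  unfolding quot_norm_def
proof (rule cINF_lower[OF _ j])
  obtain Bf where Bf: "\<And>n x. cmod (f n x) \<le> Bf" using ell_inf_bounded[OF f] by blast
  have "0 \<le> ell_norm (\<lambda>n x. f n x - j' n x)" if j': "j' \<in> J2 \<omega> \<Delta>" for j'
  proof -
    obtain Bj where Bj: "\<And>n x. cmod (j' n x) \<le> Bj" using ell_inf_bounded[OF J2_imp_ell_inf[OF j']] by blast
    have "cmod (f n x - j' n x) \<le> Bf + Bj" for n x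
      using norm_triangle_ineq4[of "f n x" "j' n x"] Bf[of n x] Bj[of n x] by linarith
    then show ?thesis using norm_le_ell_norm[of "\<lambda>n x. f n x - j' n x"] norm_ge_zero order_trans by blast
  qed
  then show "bdd_below ((\<lambda>j. ell_norm (\<lambda>n x. f n x - j n x)) ` J2 \<omega> \<Delta>)"
    by (rule bdd_belowI2)
qed

lemma quot_norm_less_imp:
  assumes "quot_norm (J2 \<omega> \<Delta>) f < \<epsilon>"
  obtains j where "j \<in> J2 \<omega> \<Delta>" "ell_norm (\<lambda>n x. f n x - j n x) < \<epsilon>"
proof -
  have "(\<lambda>j. ell_norm (\<lambda>n x. f n x - j n x)) ` J2 \<omega> \<Delta> \<noteq> {}" using zero_in_J2 by blast
  from cInf_lessD[OF this] assms show ?thesis using that unfolding quot_norm_def by blast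
qed

section \<open>Weak* ultralimits of probability measures\<close>

lemma of_discrete_discrete [simp]: "of_discrete (discrete a) = a"
  by (simp add: discrete_inverse)

lemma discrete_of_discrete [simp]: "discrete (of_discrete d) = d"
  by (simp add: of_discrete_inverse)

lemma discrete_eq_iff: "discrete a = d \<longleftrightarrow> a = of_discrete d"
  by auto

lemma borel_measurable_dist_const [measurable]:
  "(\<lambda>x. dist (c::'a::metric_space) x) \<in> borel_measurable borel"
  by (intro borel_measurable_continuous_onI continuous_intros)

lemma measurable_discrete: "(g :: nat discrete \<Rightarrow> 'b::topological_space) \<in> borel \<rightarrow>\<^sub>M borel"
  by (rule measurableI) (auto intro: borel_open[OF open_discrete])

lemma space_PiM_UNIV_nat_discrete [simp]:
  "space (PiM UNIV (\<lambda>_. borel :: nat discrete measure)) = UNIV"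
  by (auto simp: space_PiM PiE_def extensional_def)

lemma sets_PiM_nat_discrete_finite:
  assumes J: "finite J" and A: "A \<subseteq> space (PiM J (\<lambda>_. borel :: nat discrete measure))"
  shows "A \<in> sets (PiM J (\<lambda>_. borel :: nat discrete measure))"
proof -
  have space: "space (PiM J (\<lambda>_. borel :: nat discrete measure)) = PiE J (\<lambda>_. UNIV)"
    by (simp add: space_PiM)
  have "countable A"
    using countable_subset[OF A[unfolded space] countable_PiE[OF J]] by simp
  moreover have "{t} \<in> sets (PiM J (\<lambda>_. borel :: nat discrete measure))" if "t \<in> A" for t
  proof -
    have "t \<in> PiE J (\<lambda>_. UNIV)" using that A space by auto
    then have "{t} = PiE J (\<lambda>m. {t m})"
      by (auto simp: PiE_def extensional_def Pi_def fun_eq_iff) metis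
    moreover have "PiE J (\<lambda>m. {t m}) \<in> sets (PiM J (\<lambda>_. borel :: nat discrete measure))"
      by (rule sets_PiM_I_finite[OF J]) (simp add: borel_open[OF open_discrete])
    ultimately show ?thesis by simp
  qed
  ultimately have "(\<Union>t\<in>A. {t}) \<in> sets (PiM J (\<lambda>_. borel :: nat discrete measure))"
    by (intro sets.countable_UN') auto
  then show ?thesis by simp
qed

lemma measurable_PiM_nat_discrete_finite:
  assumes "finite J"
  shows "(F :: (nat \<Rightarrow> nat discrete) \<Rightarrow> 'b::topological_space)
     \<in> borel_measurable (PiM J (\<lambda>_. borel :: nat discrete measure))"
  by (rule measurableI) (auto intro!: sets_PiM_nat_discrete_finite[OF assms])

lemma prob_space_abs_integral_diff_le:
  fixes g h :: "_ \<Rightarrow> real"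
  assumes "prob_space M" and g: "integrable M g" and h: "integrable M h"
    and close: "AE x in M. \<bar>g x - h x\<bar> \<le> c"
  shows "\<bar>integral\<^sup>L M g - integral\<^sup>L M h\<bar> \<le> c"
proof -
  interpret prob_space M by fact
  have "\<bar>integral\<^sup>L M g - integral\<^sup>L M h\<bar> = \<bar>integral\<^sup>L M (\<lambda>x. g x - h x)\<bar>"
    using g h by simp
  also have "\<dots> \<le> integral\<^sup>L M (\<lambda>x. \<bar>g x - h x\<bar>)" by (rule integral_abs_bound)
  also have "\<dots> \<le> integral\<^sup>L M (\<lambda>x. c)"
    by (rule integral_mono_AE) (use g h close in auto)
  also have "\<dots> = c" by (simp add: prob_space)
  finally show ?thesis .
qed

lemma compact_UNIV_nets:
  assumes "compact (UNIV::'a::metric_space set)"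
  obtains net where "\<And>m (x::'a). \<exists>i<length (net m). dist (net m ! i) x < (1/2::real)^m"
proof -
  have "\<exists>xs::'a list. \<forall>x. \<exists>i<length xs. dist (xs ! i) x < (1/2::real)^m" for m :: nat
  proof -
    have "(1/2::real)^m > 0" by simp
    then obtain k where k: "finite k" "(UNIV::'a set) \<subseteq> (\<Union>x\<in>k. ball x ((1/2)^m))"
      using assms[unfolded compact_eq_totally_bounded] by blast
    obtain xs where xs: "set xs = k" using finite_list[OF k(1)] by blast
    have "\<exists>i<length xs. dist (xs ! i) x < (1/2)^m" for x
    proof -
      have "x \<in> (\<Union>x\<in>k. ball x ((1/2)^m))" using k(2) by blast
      then obtain c where "c \<in> k" "dist c x < (1/2)^m" by (auto simp: mem_ball)
      then show ?thesis using xs by (metis in_set_conv_nth)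
    qed
    then show ?thesis by blast
  qed
  then show ?thesis using that by metis
qed

text \<open>
  Ultralimits of probability measures (a substitute for the Riesz representation theorem): a point
  is coded by the sequence of its indices in 2^-m-nets, the ultralimits of the cylinder
  probabilities form a projective family on sequences in the Polish space nat discrete, and the
  projective limit, decoded back to the limit point of the coded net points, is the weak*
  ultralimit.
\<close>
locale measure_ultralimit =
  fixes \<mu> :: "nat \<Rightarrow> 'a::metric_space measure" and \<omega> :: "nat filter" and net :: "nat \<Rightarrow> 'a list"
  assumes compact_UNIV: "compact (UNIV::'a set)"
    and borel_prob_\<mu>: "\<And>k. borel_prob (\<mu> k)"
    and ultra: "free_ultrafilter \<omega>"
    and net_covers: "\<And>m x. \<exists>i<length (net m). dist (net m ! i) x < (1/2)^m"
begin

definition "net_index m x = (LEAST i. dist (net m ! i) x < (1/2::real)^m)"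
definition "code x = (\<lambda>m. discrete (net_index m x))"
definition "code_on J x = restrict (code x) J"
definition "codes J = PiE J (\<lambda>m. discrete ` {..<length (net m)})"

lemma net_index: "net_index m x < length (net m) \<and> dist (net m ! net_index m x) x < (1/2)^m"
proof -
  obtain i where i: "i < length (net m)" "dist (net m ! i) x < (1/2)^m" using net_covers by blast
  have "dist (net m ! net_index m x) x < (1/2)^m" unfolding net_index_def using i(2) by (rule LeastI)
  moreover have "net_index m x \<le> i" unfolding net_index_def using i(2) by (rule Least_le)
  ultimately show ?thesis using i(1) by simp
qed

lemma Collect_net_index_eq:
  "{x. net_index m x = i} = {x. dist (net m ! i) x < (1/2)^m \<and> (\<forall>j<i. (1/2)^m \<le> dist (net m ! j) x)}"
proof (intro set_eqI iffI CollectI; elim CollectE)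
  fix x assume x: "net_index m x = i"
  then have "\<not> dist (net m ! j) x < (1/2)^m" if "j < i" for j
    using not_less_Least[of j "\<lambda>i. dist (net m ! i) x < (1/2::real)^m"] that
    unfolding net_index_def by blast
  then show "dist (net m ! i) x < (1/2)^m \<and> (\<forall>j<i. (1/2)^m \<le> dist (net m ! j) x)"
    using net_index[of m x] x by (simp add: not_less)
next
  fix x assume "dist (net m ! i) x < (1/2)^m \<and> (\<forall>j<i. (1/2)^m \<le> dist (net m ! j) x)"
  then show "net_index m x = i"
    unfolding net_index_def by (intro Least_equality) (auto simp flip: not_less)
qed

lemma sets_Collect_net_index [measurable]: "{x. net_index m x = i} \<in> sets borel"
  unfolding Collect_net_index_eq by measurable

lemma measurable_net_index [measurable]: "net_index m \<in> borel \<rightarrow>\<^sub>M count_space UNIV"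
  by (subst measurable_count_space_eq2_countable) (auto simp: vimage_def)

lemma sets_Collect_code_on [measurable]: "{x. code_on J x = t} \<in> sets borel"
proof (cases "t \<in> extensional J")
  case True
  have "{x. code_on J x = t} = {x. \<forall>m\<in>J. net_index m x = of_discrete (t m)}"
    using True by (auto simp: code_on_def code_def restrict_def extensional_def fun_eq_iff
        discrete_eq_iff split: if_splits)
  then show ?thesis by simp
next
  case False
  then have "{x. code_on J x = t} = {}" by (auto simp: code_on_def)
  then show ?thesis by simp
qed

lemma code_on_in_codes: "code_on J x \<in> codes J"
  using net_index by (auto simp: code_on_def codes_def code_def)

lemma finite_codes: "finite J \<Longrightarrow> finite (codes J)"
  unfolding codes_def by (intro finite_PiE) auto

lemma restrict_codes: "t \<in> codes J \<Longrightarrow> restrict t J = t"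
  by (auto simp: codes_def PiE_def extensional_def fun_eq_iff)

lemma restrict_code_on: "J \<subseteq> H \<Longrightarrow> restrict (code_on H x) J = code_on J x"
  by (auto simp: code_on_def restrict_def fun_eq_iff)

lemma sets_\<mu>: "sets (\<mu> k) = sets borel"
  using borel_prob_\<mu> borel_prob_sets by blast

lemma prob_space_\<mu>: "prob_space (\<mu> k)"
  using borel_prob_\<mu> borel_prob_prob_space by blast

lemma measure_code_on_in:
  assumes "finite J"
  shows "measure (\<mu> k) {x. code_on J x \<in> A} = (\<Sum>t\<in>codes J \<inter> A. measure (\<mu> k) {x. code_on J x = t})"
proof -
  interpret prob_space "\<mu> k" by (rule prob_space_\<mu>)
  have "{x. code_on J x \<in> A} = (\<Union>t\<in>codes J \<inter> A. {x. code_on J x = t})"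
    using code_on_in_codes by auto
  then show ?thesis
    by simp (rule finite_measure_finite_Union,
        use assms finite_codes sets_\<mu> in \<open>auto simp: disjoint_family_on_def\<close>)
qed

lemma ultra_proper: "\<omega> \<noteq> bot"
  using ultra free_ultrafilter_not_bot by blast

definition "cylinder_weight J t = Lim \<omega> (\<lambda>k. measure (\<mu> k) {x. code_on J x = t})"

lemma tendsto_cylinder_weight:
  "((\<lambda>k. measure (\<mu> k) {x. code_on J x = t}) \<longlongrightarrow> cylinder_weight J t) \<omega>"
proof -
  have "\<bar>measure (\<mu> k) S\<bar> \<le> 1" for k S
    using prob_space.prob_le_1[OF prob_space_\<mu>] by simp
  then show ?thesis
    unfolding cylinder_weight_def by (rule free_ultrafilter_tendsto_Lim[OF ultra])
qed

lemma cylinder_weight_nonneg: "0 \<le> cylinder_weight J t"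
  by (rule tendsto_lowerbound[OF tendsto_cylinder_weight _ ultra_proper]) auto

lemma tendsto_measure_code_on_in:
  "finite J \<Longrightarrow>
    ((\<lambda>k. measure (\<mu> k) {x. code_on J x \<in> A}) \<longlongrightarrow> (\<Sum>t\<in>codes J \<inter> A. cylinder_weight J t)) \<omega>"
  unfolding measure_code_on_in by (intro tendsto_sum tendsto_cylinder_weight)

lemma sum_cylinder_weight:
  assumes "finite J"
  shows "(\<Sum>t\<in>codes J. cylinder_weight J t) = 1"
proof -
  have "measure (\<mu> k) {x. code_on J x \<in> UNIV} = 1" for k
    using prob_space.prob_space[OF prob_space_\<mu>] borel_prob_space[OF borel_prob_\<mu>] by simp
  then have "((\<lambda>k. 1) \<longlongrightarrow> (\<Sum>t\<in>codes J. cylinder_weight J t)) \<omega>"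
    using tendsto_measure_code_on_in[OF assms, of UNIV] by simp
  then show ?thesis using tendsto_unique[OF ultra_proper] tendsto_const by metis
qed

lemma cylinder_weight_outside:
  assumes "t \<notin> codes J"
  shows "cylinder_weight J t = 0"
proof -
  have "{x. code_on J x = t} = {}" using assms code_on_in_codes by auto
  then have "((\<lambda>k. 0) \<longlongrightarrow> cylinder_weight J t) \<omega>" using tendsto_cylinder_weight[of J t] by simp
  then show ?thesis using tendsto_unique[OF ultra_proper] tendsto_const by metis
qed

definition "cylinder_pmf J = embed_pmf (cylinder_weight J)"

lemma pmf_cylinder_pmf:
  assumes "finite J"
  shows "pmf (cylinder_pmf J) t = cylinder_weight J t"
proof -
  have "(\<integral>\<^sup>+ x. ennreal (cylinder_weight J x) \<partial>count_space UNIV) = (\<Sum>x\<in>codes J. ennreal (cylinder_weight J x))"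
    by (rule nn_integral_count_space') (use assms finite_codes cylinder_weight_outside in auto)
  also have "\<dots> = 1"
    using sum_cylinder_weight[OF assms] by (subst sum_ennreal) (auto simp: cylinder_weight_nonneg)
  finally show ?thesis
    unfolding cylinder_pmf_def by (intro pmf_embed_pmf) (auto simp: cylinder_weight_nonneg)
qed

lemma set_pmf_cylinder_pmf: "finite J \<Longrightarrow> set_pmf (cylinder_pmf J) \<subseteq> codes J"
  using pmf_cylinder_pmf cylinder_weight_outside by (auto simp: set_pmf_eq)

definition "marginal J = distr (measure_pmf (cylinder_pmf J)) (PiM J (\<lambda>_. borel)) (\<lambda>t. restrict t J)"

lemma measurable_restrict_pmf:
  "(\<lambda>t. restrict t J) \<in> measure_pmf p \<rightarrow>\<^sub>M PiM J (\<lambda>_. borel :: nat discrete measure)"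
  by (simp add: measurable_pmf_measure1 space_PiM)

lemma sets_marginal [simp]: "sets (marginal J) = sets (PiM J (\<lambda>_. borel))"
  by (simp add: marginal_def)

lemma prob_space_marginal: "prob_space (marginal J)"
  unfolding marginal_def
  by (rule prob_space.prob_space_distr[OF prob_space_measure_pmf measurable_restrict_pmf])

lemma emeasure_marginal:
  assumes J: "finite J" and A: "A \<in> sets (PiM J (\<lambda>_. borel))"
  shows "emeasure (marginal J) A = ennreal (\<Sum>t\<in>codes J \<inter> A. cylinder_weight J t)"
proof -
  let ?p = "measure_pmf (cylinder_pmf J)" and ?S = "(\<lambda>t. restrict t J) -` A"
  have "emeasure (marginal J) A = emeasure ?p ?S"
    unfolding marginal_def using A by (subst emeasure_distr[OF measurable_restrict_pmf]) auto
  also have "\<dots> = emeasure ?p (?S \<inter> set_pmf (cylinder_pmf J))"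
    by (simp add: emeasure_Int_set_pmf)
  also have "?S \<inter> set_pmf (cylinder_pmf J) = (codes J \<inter> A) \<inter> set_pmf (cylinder_pmf J)"
    using set_pmf_cylinder_pmf[OF J] restrict_codes by auto
  also have "emeasure ?p \<dots> = emeasure ?p (codes J \<inter> A)"
    by (simp add: emeasure_Int_set_pmf)
  also have "\<dots> = ennreal (\<Sum>t\<in>codes J \<inter> A. pmf (cylinder_pmf J) t)"
    by (rule emeasure_measure_pmf_finite) (use J finite_codes in auto)
  finally show ?thesis using pmf_cylinder_pmf[OF J] by simp
qed

lemma projective_family_marginal: "projective_family UNIV marginal (\<lambda>_. borel :: nat discrete measure)"
proof (unfold projective_family_def, intro conjI allI impI)
  fix J H :: "nat set" assume JH: "J \<subseteq> H" "finite H"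
  then have J: "finite J" using finite_subset by blast
  have restrict: "(\<lambda>f. restrict f J) \<in> marginal H \<rightarrow>\<^sub>M PiM J (\<lambda>_. borel :: nat discrete measure)"
    using measurable_cong_sets[OF sets_marginal refl] measurable_restrict_subset[OF JH(1)] by blast
  show "marginal J = distr (marginal H) (PiM J (\<lambda>_. borel)) (\<lambda>f. restrict f J)"
  proof (rule measure_eqI)
    fix A assume "A \<in> sets (marginal J)"
    then have A: "A \<in> sets (PiM J (\<lambda>_. borel))" by simp
    let ?B = "(\<lambda>f. restrict f J) -` A \<inter> space (marginal H)"
    have B: "?B \<in> sets (PiM H (\<lambda>_. borel))" using measurable_sets[OF restrict A] by simp
    have "{x. code_on H x \<in> ?B} = {x. code_on J x \<in> A}"
      using restrict_code_on[OF JH(1)] by (auto simp: space_PiM marginal_def code_on_def)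
    then have "(\<Sum>t\<in>codes H \<inter> ?B. cylinder_weight H t) = (\<Sum>t\<in>codes J \<inter> A. cylinder_weight J t)"
      using tendsto_measure_code_on_in[OF JH(2), of ?B] tendsto_measure_code_on_in[OF J, of A]
        tendsto_unique[OF ultra_proper] by simp
    then show "emeasure (marginal J) A = emeasure (distr (marginal H) (PiM J (\<lambda>_. borel)) (\<lambda>f. restrict f J)) A"
      by (simp add: emeasure_distr[OF restrict A] emeasure_marginal[OF JH(2) B] emeasure_marginal[OF J A])
  qed simp
qed (rule prob_space_marginal)

end

sublocale measure_ultralimit \<subseteq> K: polish_projective UNIV marginal
  unfolding polish_projective_def by (rule projective_family_marginal)

context measure_ultralimit
begin

lemma measurable_lim_restrict:
  "(\<lambda>s. restrict s J) \<in> K.lim \<rightarrow>\<^sub>M PiM J (\<lambda>_. borel :: nat discrete measure)"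
  using measurable_cong_sets[OF K.sets_lim refl] measurable_restrict_subset[of J UNIV] by blast

lemma distr_lim_restrict:
  assumes J: "finite J"
  shows "distr K.lim (PiM J (\<lambda>_. borel)) (\<lambda>s. restrict s J) = marginal J"
proof (rule measure_eqI)
  fix A assume "A \<in> sets (distr K.lim (PiM J (\<lambda>_. borel)) (\<lambda>s. restrict s J))"
  then have A: "A \<in> sets (PiM J (\<lambda>_. borel :: nat discrete measure))" by simp
  have "emeasure (distr K.lim (PiM J (\<lambda>_. borel)) (\<lambda>s. restrict s J)) A
      = emeasure K.lim (prod_emb UNIV (\<lambda>_. borel) J A)"
    by (simp add: emeasure_distr[OF measurable_lim_restrict A] prod_emb_def space_PiM)
  also have "\<dots> = emeasure (marginal J) A"
    by (rule K.emeasure_lim_emb) (use J A in auto)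
  finally show "emeasure (distr K.lim (PiM J (\<lambda>_. borel)) (\<lambda>s. restrict s J)) A = emeasure (marginal J) A" .
qed simp

lemma integral_code_on:
  fixes F :: "(nat \<Rightarrow> nat discrete) \<Rightarrow> real"
  assumes J: "finite J"
  shows "integral\<^sup>L (\<mu> k) (\<lambda>x. F (code_on J x)) = (\<Sum>t\<in>codes J. F t * measure (\<mu> k) {x. code_on J x = t})"
proof -
  interpret prob_space "\<mu> k" by (rule prob_space_\<mu>)
  have "(\<Sum>t\<in>codes J. F t * indicator {x. code_on J x = t} x) = F (code_on J x)" for x
  proof -
    have "(\<Sum>t\<in>codes J. F t * indicator {x. code_on J x = t} x) = (\<Sum>t\<in>codes J. if t = code_on J x then F t else 0)"
      by (intro sum.cong) (auto simp: indicator_def)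
    also have "\<dots> = F (code_on J x)" using code_on_in_codes finite_codes[OF J] by (simp add: sum.delta')
    finally show ?thesis .
  qed
  then have "F (code_on J x) = (\<Sum>t\<in>codes J. F t * indicator {x. code_on J x = t} x)" for x
    by simp
  moreover have "integrable (\<mu> k) (\<lambda>x. F t * indicator {x. code_on J x = t} x)" for t
    by (intro integrable_mult_right integrable_real_indicator)
      (auto simp: sets_\<mu> emeasure_finite top.not_eq_extremum[symmetric])
  ultimately show ?thesis by (simp add: sets_\<mu>)
qed

lemma integral_lim_restrict:
  fixes F :: "(nat \<Rightarrow> nat discrete) \<Rightarrow> real"
  assumes J: "finite J"
  shows "integral\<^sup>L K.lim (\<lambda>s. F (restrict s J)) = (\<Sum>t\<in>codes J. F t * cylinder_weight J t)"
proof -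
  note F_measurable = measurable_PiM_nat_discrete_finite[OF J]
  have "integral\<^sup>L K.lim (\<lambda>s. F (restrict s J)) = integral\<^sup>L (marginal J) F"
    by (simp add: integral_distr[OF measurable_lim_restrict F_measurable, symmetric] distr_lim_restrict[OF J])
  also have "\<dots> = integral\<^sup>L (measure_pmf (cylinder_pmf J)) (\<lambda>t. F (restrict t J))"
    unfolding marginal_def by (rule integral_distr[OF measurable_restrict_pmf F_measurable])
  also have "\<dots> = (\<Sum>t\<in>codes J. F (restrict t J) * pmf (cylinder_pmf J) t)"
    by (rule integral_measure_pmf_real) (use finite_codes[OF J] set_pmf_cylinder_pmf[OF J] in auto)
  also have "\<dots> = (\<Sum>t\<in>codes J. F t * cylinder_weight J t)"
    by (simp add: restrict_codes pmf_cylinder_pmf[OF J])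
  finally show ?thesis .
qed

lemma tendsto_integral_code_on:
  fixes F :: "(nat \<Rightarrow> nat discrete) \<Rightarrow> real"
  assumes "finite J"
  shows "((\<lambda>k. integral\<^sup>L (\<mu> k) (\<lambda>x. F (code_on J x))) \<longlongrightarrow> integral\<^sup>L K.lim (\<lambda>s. F (restrict s J))) \<omega>"
  unfolding integral_lim_restrict[OF assms] integral_code_on[OF assms]
  by (intro tendsto_sum tendsto_mult_left tendsto_cylinder_weight)

definition "net_point m s = net m ! of_discrete (s m)"

lemma dist_net_point_code: "dist (net_point m (code x)) x < (1/2)^m"
  using net_index by (simp add: net_point_def code_def)

lemma measurable_net_point: "net_point m \<in> K.lim \<rightarrow>\<^sub>M borel"
proof -
  have "(\<lambda>s. s m) \<in> K.lim \<rightarrow>\<^sub>M (borel :: nat discrete measure)"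
    using measurable_cong_sets[OF K.sets_lim refl] measurable_component_singleton[of m UNIV] by blast
  from measurable_comp[OF this measurable_discrete[of "\<lambda>d. net m ! of_discrete d"]] show ?thesis
    by (simp add: o_def net_point_def[abs_def])
qed

definition "coherent s \<longleftrightarrow> (\<forall>m. dist (net_point m s) (net_point (Suc m) s) < 2 * (1/2)^m)"

lemma sets_coherent_step: "{s. dist (net_point m s) (net_point (Suc m) s) < 2 * (1/2)^m} \<in> sets K.lim"
proof -
  let ?J = "{m, Suc m}"
  let ?A = "{t \<in> space (PiM ?J (\<lambda>_. borel :: nat discrete measure)).
              dist (net_point m t) (net_point (Suc m) t) < 2 * (1/2)^m}"
  have A: "?A \<in> sets (PiM ?J (\<lambda>_. borel :: nat discrete measure))"
    by (rule sets_PiM_nat_discrete_finite) auto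
  have "(\<lambda>s. restrict s ?J) -` ?A \<inter> space K.lim = {s. dist (net_point m s) (net_point (Suc m) s) < 2 * (1/2)^m}"
    by (auto simp: net_point_def space_PiM)
  then show ?thesis using measurable_sets[OF measurable_lim_restrict A] by simp
qed

lemma sets_coherent: "{s. coherent s} \<in> sets K.lim"
proof -
  have "{s. coherent s} = (\<Inter>m. {s. dist (net_point m s) (net_point (Suc m) s) < 2 * (1/2)^m})"
    by (auto simp: coherent_def)
  then show ?thesis using sets_coherent_step by auto
qed

lemma AE_coherent: "AE s in K.lim. coherent s"
proof -
  have "AE s in K.lim. dist (net_point m s) (net_point (Suc m) s) < 2 * (1/2)^m" for m
  proof -
    let ?J = "{m, Suc m}"
    define F where "F = (indicator {t. dist (net_point m t) (net_point (Suc m) t) < 2 * (1/2)^m}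
        :: (nat \<Rightarrow> nat discrete) \<Rightarrow> real)"
    have "dist (net_point m (code x)) (net_point (Suc m) (code x)) < 2 * (1/2)^m" for x
    proof -
      have "dist (net_point m (code x)) (net_point (Suc m) (code x))
          \<le> dist (net_point m (code x)) x + dist (net_point (Suc m) (code x)) x"
        by (rule dist_triangle2)
      also have "\<dots> < (1/2)^m + (1/2)^Suc m" using dist_net_point_code by (intro add_strict_mono)
      also have "\<dots> \<le> 2 * (1/2)^m" by simp
      finally show ?thesis .
    qed
    then have "F (code_on ?J x) = 1" for x by (simp add: F_def code_on_def net_point_def)
    then have "((\<lambda>k. 1) \<longlongrightarrow> integral\<^sup>L K.lim (\<lambda>s. F (restrict s ?J))) \<omega>"
      using tendsto_integral_code_on[of ?J F] prob_space.prob_space[OF prob_space_\<mu>] by simp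
    then have "integral\<^sup>L K.lim (\<lambda>s. F (restrict s ?J)) = 1"
      using tendsto_unique[OF ultra_proper] tendsto_const by metis
    moreover have "(\<lambda>s. F (restrict s ?J)) = indicator {s. dist (net_point m s) (net_point (Suc m) s) < 2 * (1/2)^m}"
      by (auto simp: F_def net_point_def indicator_def fun_eq_iff)
    ultimately have "measure K.lim {s. dist (net_point m s) (net_point (Suc m) s) < 2 * (1/2)^m} = 1"
      by simp
    then show ?thesis
      using K.P.AE_in_set_eq_1[OF sets_coherent_step[of m]] by simp
  qed
  then show ?thesis unfolding coherent_def by (simp add: AE_all_countable)
qed

lemma dist_net_point_coherent:
  assumes "coherent s" and "m \<le> n"
  shows "dist (net_point m s) (net_point n s) \<le> 4 * (1/2)^m - 4 * (1/2)^n"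
  using \<open>m \<le> n\<close>
proof (induction n rule: dec_induct)
  case (step n)
  have "dist (net_point m s) (net_point (Suc n) s)
      \<le> dist (net_point m s) (net_point n s) + dist (net_point n s) (net_point (Suc n) s)"
    by (rule dist_triangle)
  also have "\<dots> \<le> 4 * (1/2)^m - 4 * (1/2)^n + 2 * (1/2)^n"
    using step.IH assms(1) unfolding coherent_def by (intro add_mono) (auto intro: less_imp_le)
  finally show ?case by simp
qed simp

lemma convergent_net_point:
  assumes "coherent s"
  shows "convergent (\<lambda>m. net_point m s)"
proof -
  have "Cauchy (\<lambda>m. net_point m s)"
  proof (rule metric_CauchyI)
    fix e :: real assume "e > 0"
    then obtain M where M: "(1/2)^M < e / 8"
      using real_arch_pow_inv[of "e/8" "1/2"] by auto
    have near: "dist (net_point M s) (net_point k s) < e / 2" if "M \<le> k" for k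
      using dist_net_point_coherent[OF assms that] M zero_le_power[of "1/2::real" k] by linarith
    have "dist (net_point m s) (net_point n s) < e" if "M \<le> m" "M \<le> n" for m n
      using dist_triangle3[of "net_point m s" "net_point n s" "net_point M s"] near[OF that(1)]
        near[OF that(2)] by linarith
    then show "\<exists>M. \<forall>m\<ge>M. \<forall>n\<ge>M. dist (net_point m s) (net_point n s) < e" by blast
  qed
  then show ?thesis
    using compact_imp_complete[OF compact_UNIV] unfolding complete_def by (metis UNIV_I convergent_def)
qed

definition "decode s = (if coherent s then lim (\<lambda>m. net_point m s) else undefined)"

lemma net_point_tendsto_decode: "coherent s \<Longrightarrow> (\<lambda>m. net_point m s) \<longlonglongrightarrow> decode s"
  using convergent_net_point by (simp add: decode_def convergent_LIMSEQ_iff)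

lemma dist_decode_net_point:
  assumes "coherent s"
  shows "dist (decode s) (net_point m s) \<le> 4 * (1/2)^m"
proof -
  have "eventually (\<lambda>n. dist (net_point m s) (net_point n s) \<le> 4 * (1/2)^m) sequentially"
  proof (rule eventually_sequentiallyI[of m])
    fix n assume "m \<le> n"
    then show "dist (net_point m s) (net_point n s) \<le> 4 * (1/2)^m"
      using dist_net_point_coherent[OF assms \<open>m \<le> n\<close>] zero_le_power[of "1/2::real" n] by linarith
  qed
  with tendsto_dist[OF tendsto_const net_point_tendsto_decode[OF assms]]
  have "dist (net_point m s) (decode s) \<le> 4 * (1/2)^m"
    by (rule tendsto_upperbound) simp
  then show ?thesis by (simp add: dist_commute)
qed

lemma measurable_decode: "decode \<in> K.lim \<rightarrow>\<^sub>M borel"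
proof (rule borel_measurable_LIMSEQ_metric)
  show "(\<lambda>s. if s \<in> {s. coherent s} then net_point i s else undefined) \<in> K.lim \<rightarrow>\<^sub>M borel" for i
    by (rule measurable_If_set[OF measurable_net_point measurable_const]) (use sets_coherent in auto)
  show "(\<lambda>i. if s \<in> {s. coherent s} then net_point i s else undefined) \<longlonglongrightarrow> decode s" for s
    using net_point_tendsto_decode by (cases "coherent s") (auto simp: decode_def)
qed

definition "ultralimit = distr K.lim borel decode"

lemma borel_prob_ultralimit: "borel_prob ultralimit"
  unfolding borel_prob_def ultralimit_def using K.P.prob_space_distr[OF measurable_decode] by simp

lemma abs_integral_diff_net_point_code_le:
  fixes f :: "'a \<Rightarrow> real"
  assumes f: "continuous_on UNIV f" and modulus: "\<And>x y. dist x y < d \<Longrightarrow> \<bar>f x - f y\<bar> \<le> e"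
    and m: "4 * (1/2)^m < d"
  shows "\<bar>integral\<^sup>L (\<mu> k) f - integral\<^sup>L (\<mu> k) (\<lambda>x. f (net_point m (code x)))\<bar> \<le> e"
proof (rule prob_space_abs_integral_diff_le[OF prob_space_\<mu>])
  interpret prob_space "\<mu> k" by (rule prob_space_\<mu>)
  obtain B where B: "\<And>x. norm (f x) \<le> B" using compact_UNIV_continuous_bounded[OF compact_UNIV f] by blast
  have "(\<lambda>x. f (net m ! net_index m x)) \<in> borel_measurable borel"
    by (rule measurable_compose[OF measurable_net_index]) simp
  then have "(\<lambda>x. f (net m ! net_index m x)) \<in> borel_measurable (\<mu> k)"
    using measurable_cong_sets[OF sets_\<mu> refl] by blast
  then have "(\<lambda>x. f (net_point m (code x))) \<in> borel_measurable (\<mu> k)"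
    by (simp add: net_point_def code_def)
  then show "integrable (\<mu> k) (\<lambda>x. f (net_point m (code x)))"
    using B by (intro integrable_const_bound[where B=B]) auto
  show "integrable (\<mu> k) f"
    by (rule integrable_const_bound[where B=B]) (use B borel_prob_measurable_continuous[OF borel_prob_\<mu> f] in auto)
  have "dist (net_point m (code x)) x < d" for x
    using dist_net_point_code[of m x] m zero_le_power[of "1/2::real" m] by linarith
  then show "AE x in \<mu> k. \<bar>f x - f (net_point m (code x))\<bar> \<le> e"
    using modulus by (simp add: dist_commute)
qed

lemma abs_integral_diff_decode_net_point_le:
  fixes f :: "'a \<Rightarrow> real"
  assumes f: "continuous_on UNIV f" and modulus: "\<And>x y. dist x y < d \<Longrightarrow> \<bar>f x - f y\<bar> \<le> e"
    and m: "4 * (1/2)^m < d"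
  shows "\<bar>integral\<^sup>L K.lim (\<lambda>s. f (decode s)) - integral\<^sup>L K.lim (\<lambda>s. f (net_point m s))\<bar> \<le> e"
proof (rule prob_space_abs_integral_diff_le[OF K.P.prob_space_axioms])
  obtain B where B: "\<And>x. norm (f x) \<le> B" using compact_UNIV_continuous_bounded[OF compact_UNIV f] by blast
  have f_borel: "f \<in> borel_measurable borel" by (rule borel_measurable_continuous_onI[OF f])
  show "integrable K.lim (\<lambda>s. f (decode s))"
    by (rule K.P.integrable_const_bound[where B=B]) (use B measurable_compose[OF measurable_decode f_borel] in auto)
  show "integrable K.lim (\<lambda>s. f (net_point m s))"
    by (rule K.P.integrable_const_bound[where B=B]) (use B measurable_compose[OF measurable_net_point f_borel] in auto)
  show "AE s in K.lim. \<bar>f (decode s) - f (net_point m s)\<bar> \<le> e"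
    using AE_coherent
  proof (rule eventually_mono)
    fix s assume "coherent s"
    then have "dist (decode s) (net_point m s) < d" using dist_decode_net_point[of s m] m by simp
    then show "\<bar>f (decode s) - f (net_point m s)\<bar> \<le> e" by (rule modulus)
  qed
qed

lemma tendsto_integral_ultralimit:
  fixes f :: "'a \<Rightarrow> real"
  assumes f: "continuous_on UNIV f"
  shows "((\<lambda>k. integral\<^sup>L (\<mu> k) f) \<longlongrightarrow> integral\<^sup>L ultralimit f) \<omega>"
proof -
  have "integral\<^sup>L ultralimit f = integral\<^sup>L K.lim (\<lambda>s. f (decode s))"
    unfolding ultralimit_def by (rule integral_distr[OF measurable_decode borel_measurable_continuous_onI[OF f]])
  moreover have "((\<lambda>k. integral\<^sup>L (\<mu> k) f) \<longlongrightarrow> integral\<^sup>L K.lim (\<lambda>s. f (decode s))) \<omega>"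
  proof (rule tendstoI)
    fix e :: real assume "e > 0"
    then obtain d where "d > 0" and "\<And>x y. dist x y < d \<Longrightarrow> dist (f x) (f y) < e / 4"
      using compact_uniformly_continuous[OF f compact_UNIV]
      unfolding uniformly_continuous_on_def by (metis UNIV_I zero_less_divide_iff zero_less_numeral)
    then have modulus: "\<And>x y. dist x y < d \<Longrightarrow> \<bar>f x - f y\<bar> \<le> e / 4"
      by (simp add: dist_real_def less_imp_le)
    obtain m where "(1/2)^m < d / 4"
      using real_arch_pow_inv[of "d/4" "1/2"] \<open>d > 0\<close> by auto
    then have m: "4 * (1/2)^m < d" by simp
    have "((\<lambda>k. integral\<^sup>L (\<mu> k) (\<lambda>x. f (net_point m (code x)))) \<longlongrightarrow> integral\<^sup>L K.lim (\<lambda>s. f (net_point m s))) \<omega>"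
      using tendsto_integral_code_on[of "{m}" "\<lambda>t. f (net m ! of_discrete (t m))"]
      by (simp add: code_on_def net_point_def)
    then have "eventually (\<lambda>k. dist (integral\<^sup>L (\<mu> k) (\<lambda>x. f (net_point m (code x))))
        (integral\<^sup>L K.lim (\<lambda>s. f (net_point m s))) < e / 4) \<omega>"
      by (rule tendstoD) (use \<open>e > 0\<close> in simp)
    then show "eventually (\<lambda>k. dist (integral\<^sup>L (\<mu> k) f) (integral\<^sup>L K.lim (\<lambda>s. f (decode s))) < e) \<omega>"
    proof (rule eventually_mono)
      fix k
      assume "dist (integral\<^sup>L (\<mu> k) (\<lambda>x. f (net_point m (code x)))) (integral\<^sup>L K.lim (\<lambda>s. f (net_point m s))) < e / 4"
      then show "dist (integral\<^sup>L (\<mu> k) f) (integral\<^sup>L K.lim (\<lambda>s. f (decode s))) < e"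
        using abs_integral_diff_net_point_code_le[OF f modulus m, of k]
          abs_integral_diff_decode_net_point_le[OF f modulus m] \<open>e > 0\<close>
        unfolding dist_real_def by linarith
    qed
  qed
  ultimately show ?thesis by simp
qed

end

lemma weak_star_ultralimit_exists:
  fixes \<mu> :: "nat \<Rightarrow> 'a::metric_space measure"
  assumes "compact (UNIV::'a set)" and "\<And>k. borel_prob (\<mu> k)" and "free_ultrafilter \<omega>"
  obtains \<nu> where "borel_prob \<nu>"
    and "\<And>f::'a \<Rightarrow> real. continuous_on UNIV f \<Longrightarrow> ((\<lambda>k. integral\<^sup>L (\<mu> k) f) \<longlongrightarrow> integral\<^sup>L \<nu> f) \<omega>"
proof -
  obtain net :: "nat \<Rightarrow> 'a list" where "\<And>m x. \<exists>i<length (net m). dist (net m ! i) x < (1/2)^m"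
    using compact_UNIV_nets[OF assms(1)] by blast
  with assms interpret measure_ultralimit \<mu> \<omega> net
    by unfold_locales
  show ?thesis using that borel_prob_ultralimit tendsto_integral_ultralimit by blast
qed

lemma tendsto_integral_complex_of_real_parts:
  fixes \<mu> :: "nat \<Rightarrow> 'a::metric_space measure" and f :: "'a \<Rightarrow> complex"
  assumes cpt: "compact (UNIV :: 'a set)" and \<mu>: "\<And>k. borel_prob (\<mu> k)" and \<nu>: "borel_prob \<nu>"
    and real_tendsto: "\<And>g::'a \<Rightarrow> real. continuous_on UNIV g \<Longrightarrow> ((\<lambda>k. integral\<^sup>L (\<mu> k) g) \<longlongrightarrow> integral\<^sup>L \<nu> g) F"
    and f: "continuous_on UNIV f"
  shows "((\<lambda>k. integral\<^sup>L (\<mu> k) f) \<longlongrightarrow> integral\<^sup>L \<nu> f) F"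
proof -
  have "((\<lambda>k. Complex (integral\<^sup>L (\<mu> k) (\<lambda>x. Re (f x))) (integral\<^sup>L (\<mu> k) (\<lambda>x. Im (f x))))
      \<longlongrightarrow> Complex (integral\<^sup>L \<nu> (\<lambda>x. Re (f x))) (integral\<^sup>L \<nu> (\<lambda>x. Im (f x)))) F"
    by (intro tendsto_Complex real_tendsto continuous_intros f)
  then show ?thesis
    using borel_prob_integrable_continuous[OF cpt \<mu> f] borel_prob_integrable_continuous[OF cpt \<nu> f]
    by (simp add: integral_Re integral_Im)
qed

lemma weak_star_closed_ultralimit:
  fixes \<Delta> :: "'a::metric_space measure set" and \<mu> :: "nat \<Rightarrow> 'a measure"
  assumes cpt: "compact (UNIV :: 'a set)" and \<Delta>: "\<forall>\<mu>\<in>\<Delta>. borel_prob \<mu>"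
    and closed: "weak_star_closed \<Delta>" and ultra: "free_ultrafilter \<omega>" and \<mu>: "\<And>k. \<mu> k \<in> \<Delta>"
  obtains \<nu> where "\<nu> \<in> \<Delta>"
    and "\<And>g::'a \<Rightarrow> real. continuous_on UNIV g \<Longrightarrow> ((\<lambda>k. integral\<^sup>L (\<mu> k) g) \<longlongrightarrow> integral\<^sup>L \<nu> g) \<omega>"
proof -
  have borel_prob_\<mu>: "\<And>k. borel_prob (\<mu> k)" using \<mu> \<Delta> by blast
  obtain \<nu> where \<nu>: "borel_prob \<nu>"
    and real_tendsto: "\<And>g::'a \<Rightarrow> real. continuous_on UNIV g \<Longrightarrow> ((\<lambda>k. integral\<^sup>L (\<mu> k) g) \<longlongrightarrow> integral\<^sup>L \<nu> g) \<omega>"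
    using weak_star_ultralimit_exists[where \<mu>=\<mu>, OF cpt borel_prob_\<mu> ultra] by metis
  have near: "\<exists>\<nu>'\<in>\<Delta>. \<forall>f\<in>F. cmod (integral\<^sup>L \<nu> f - integral\<^sup>L \<nu>' f) < \<epsilon>"
    if F: "finite F" "\<forall>f\<in>F. continuous_on UNIV (f :: 'a \<Rightarrow> complex)" and "\<epsilon> > 0" for F \<epsilon>
  proof -
    have "\<forall>f\<in>F. eventually (\<lambda>k. dist (integral\<^sup>L (\<mu> k) f) (integral\<^sup>L \<nu> f) < \<epsilon>) \<omega>"
    proof
      fix f assume "f \<in> F"
      with F(2) have "continuous_on UNIV f" by blast
      from tendsto_integral_complex_of_real_parts[OF cpt borel_prob_\<mu> \<nu> real_tendsto this]
      show "eventually (\<lambda>k. dist (integral\<^sup>L (\<mu> k) f) (integral\<^sup>L \<nu> f) < \<epsilon>) \<omega>"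
        using \<open>\<epsilon> > 0\<close> by (rule tendstoD)
    qed
    then have "eventually (\<lambda>k. \<forall>f\<in>F. dist (integral\<^sup>L (\<mu> k) f) (integral\<^sup>L \<nu> f) < \<epsilon>) \<omega>"
      by (rule eventually_ball_finite[OF F(1)])
    then have "\<exists>k. \<forall>f\<in>F. dist (integral\<^sup>L (\<mu> k) f) (integral\<^sup>L \<nu> f) < \<epsilon>"
      using eventually_happens'[OF free_ultrafilter_not_bot[OF ultra]] by blast
    then obtain k where "\<forall>f\<in>F. dist (integral\<^sup>L (\<mu> k) f) (integral\<^sup>L \<nu> f) < \<epsilon>" ..
    then have "\<forall>f\<in>F. cmod (integral\<^sup>L \<nu> f - integral\<^sup>L (\<mu> k) f) < \<epsilon>"
      by (simp add: dist_commute dist_norm)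
    then show ?thesis by (intro bexI[OF _ \<mu>[of k]])
  qed
  have "\<forall>F \<epsilon>. finite F \<and> (\<forall>f\<in>F. continuous_on UNIV (f :: 'a \<Rightarrow> complex)) \<and> \<epsilon> > 0 \<longrightarrow>
      (\<exists>\<nu>'\<in>\<Delta>. \<forall>f\<in>F. cmod (integral\<^sup>L \<nu> f - integral\<^sup>L \<nu>' f) < \<epsilon>)"
    by (intro allI impI, elim conjE, rule near)
  then have "\<nu> \<in> \<Delta>"
    using closed[unfolded weak_star_closed_def, rule_format, OF conjI[OF \<nu>]] by blast
  then show ?thesis by (rule that[OF _ real_tendsto])
qed

section \<open>Uniformly small near-zero sets\<close>

lemma tendsto_integral_ramp_measure_zeros:
  fixes g :: "'a::metric_space \<Rightarrow> real"
  assumes \<nu>: "borel_prob \<nu>" and g: "continuous_on UNIV g" and nonneg: "\<And>x. 0 \<le> g x"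
  shows "(\<lambda>j. integral\<^sup>L \<nu> (\<lambda>x. min 1 (max 0 (2 - (real j + 1) * g x)))) \<longlonglongrightarrow> measure \<nu> {x. g x = 0}"
proof -
  interpret prob_space \<nu> using \<nu> borel_prob_prob_space by blast
  define h where "h j x = min 1 (max 0 (2 - (real j + 1) * g x))" for j :: nat and x
  let ?Z = "{x. g x = 0}"
  have "(\<lambda>j. integral\<^sup>L \<nu> (h j)) \<longlonglongrightarrow> integral\<^sup>L \<nu> (indicator ?Z)"
  proof (rule integral_dominated_convergence[where w="\<lambda>_. 1"])
    show "indicator ?Z \<in> borel_measurable \<nu>"
      using borel_prob_sets_Collect_eq[OF \<nu> g] by simp
    show "h j \<in> borel_measurable \<nu>" for j
      unfolding h_def by (intro borel_prob_measurable_continuous[OF \<nu>] continuous_intros g)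
    show "integrable \<nu> (\<lambda>_. 1::real)" by simp
    show "AE x in \<nu>. norm (h j x) \<le> 1" for j by (simp add: h_def)
    show "AE x in \<nu>. (\<lambda>j. h j x) \<longlonglongrightarrow> indicator ?Z x"
    proof (rule AE_I2)
      fix x
      show "(\<lambda>j. h j x) \<longlonglongrightarrow> indicator ?Z x"
      proof (cases "g x = 0")
        case True
        then show ?thesis by (simp add: h_def)
      next
        case False
        then have "g x > 0" using nonneg[of x] by simp
        obtain N :: nat where N: "real N > 2 / g x" using reals_Archimedean2 by blast
        have "h j x = 0" if "N \<le> j" for j
        proof -
          have "real j + 1 > 2 / g x" using N that by linarith
          then have "(real j + 1) * g x > 2"
            using pos_divide_less_eq[of "g x" 2 "real j + 1"] \<open>g x > 0\<close> by simp
          then show ?thesis by (simp add: h_def)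
        qed
        then have "(\<lambda>j. h j x) \<longlonglongrightarrow> 0"
          by (intro tendsto_eventually eventually_sequentiallyI[of N])
        then show ?thesis using False by simp
      qed
    qed
  qed
  then show ?thesis using borel_prob_space[OF \<nu>] unfolding h_def by simp
qed

lemma uniformly_small_sublevel_sets:
  fixes \<Delta> :: "'a::metric_space measure set" and g :: "'a \<Rightarrow> real"
  assumes cpt: "compact (UNIV :: 'a set)" and \<Delta>: "\<forall>\<mu>\<in>\<Delta>. borel_prob \<mu>"
    and closed: "weak_star_closed \<Delta>" and ultra: "free_ultrafilter \<omega>"
    and g: "continuous_on UNIV g" and nonneg: "\<And>x. 0 \<le> g x"
    and null: "\<forall>\<mu>\<in>\<Delta>. measure \<mu> {x. g x = 0} = 0" and "\<eta> > 0"
  shows "\<exists>\<kappa>>0. \<forall>\<mu>\<in>\<Delta>. measure \<mu> {x. g x < \<kappa>} \<le> \<eta>"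
proof (rule ccontr)
  assume "\<not> (\<exists>\<kappa>>0. \<forall>\<mu>\<in>\<Delta>. measure \<mu> {x. g x < \<kappa>} \<le> \<eta>)"
  then have large: "\<forall>\<kappa>>0. \<exists>\<mu>\<in>\<Delta>. \<eta> < measure \<mu> {x. g x < \<kappa>}" by (auto simp: not_le)
  have "\<exists>\<mu>. \<mu> \<in> \<Delta> \<and> \<eta> < measure \<mu> {x. g x < 1 / (real k + 1)}" for k :: nat
  proof -
    have "1 / (real k + 1) > 0" by simp
    then show ?thesis using large by blast
  qed
  then have "\<exists>\<mu>. \<forall>k. \<mu> k \<in> \<Delta> \<and> \<eta> < measure (\<mu> k) {x. g x < 1 / (real k + 1)}"
    by (intro choice allI)
  then obtain \<mu> where \<mu>: "\<And>k. \<mu> k \<in> \<Delta>" and large: "\<And>k. \<eta> < measure (\<mu> k) {x. g x < 1 / (real k + 1)}"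
    by blast
  have borel_prob_\<mu>: "\<And>k. borel_prob (\<mu> k)" using \<mu> \<Delta> by blast
  obtain \<nu> where "\<nu> \<in> \<Delta>" and tendsto_\<nu>:
    "\<And>h::'a \<Rightarrow> real. continuous_on UNIV h \<Longrightarrow> ((\<lambda>k. integral\<^sup>L (\<mu> k) h) \<longlongrightarrow> integral\<^sup>L \<nu> h) \<omega>"
    using weak_star_closed_ultralimit[where \<mu>=\<mu>, OF cpt \<Delta> closed ultra \<mu>] by metis
  define h where "h j x = min 1 (max 0 (2 - (real j + 1) * g x))" for j :: nat and x
  have h: "continuous_on UNIV (h j)" for j unfolding h_def by (intro continuous_intros g)
  have lower: "\<eta> \<le> integral\<^sup>L (\<mu> k) (h j)" if "j \<le> k" for j k
  proof -
    have above: "1 \<le> h j x" if "x \<in> {x. g x < 1 / (real k + 1)}" for x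
    proof -
      have "1 / (real k + 1) \<le> 1 / (real j + 1)" using \<open>j \<le> k\<close> by (simp add: frac_le)
      then have "g x * (real j + 1) < 1"
        using that pos_less_divide_eq[of "real j + 1" "g x" 1] by simp
      then show ?thesis by (simp add: h_def mult.commute)
    qed
    have "0 \<le> h j x" for x by (simp add: h_def)
    with borel_prob_sets_Collect_less[OF borel_prob_\<mu>[of k] g] h above
    have "measure (\<mu> k) {x. g x < 1 / (real k + 1)} \<le> integral\<^sup>L (\<mu> k) (h j)"
      by (rule borel_prob_measure_Collect_le_integral[OF cpt borel_prob_\<mu>[of k]])
    then show ?thesis using large[of k] by simp
  qed
  have lower_\<nu>: "\<eta> \<le> integral\<^sup>L \<nu> (h j)" for j
  proof (rule tendsto_lowerbound[OF tendsto_\<nu>[OF h] _ free_ultrafilter_not_bot[OF ultra]])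
    have "eventually (\<lambda>k. j \<le> k) \<omega>"
      using free_ultrafilter_le_sequentially[OF ultra] eventually_ge_at_top[of j] by (rule filter_leD)
    then show "eventually (\<lambda>k. \<eta> \<le> integral\<^sup>L (\<mu> k) (h j)) \<omega>"
      by (rule eventually_mono) (rule lower)
  qed
  have "(\<lambda>j. integral\<^sup>L \<nu> (h j)) \<longlonglongrightarrow> measure \<nu> {x. g x = 0}"
    unfolding h_def by (rule tendsto_integral_ramp_measure_zeros) (use \<Delta> \<open>\<nu> \<in> \<Delta>\<close> g nonneg in auto)
  then have "\<eta> \<le> measure \<nu> {x. g x = 0}"
    by (rule tendsto_lowerbound) (simp_all add: lower_\<nu>)
  then show False using null \<open>\<nu> \<in> \<Delta>\<close> \<open>\<eta> > 0\<close> by auto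
qed

lemma frontier_finite_Union_subset:
  fixes F :: "'a::topological_space set set"
  shows "finite F \<Longrightarrow> frontier (\<Union>F) \<subseteq> (\<Union>T\<in>F. frontier T)"
proof (induction F rule: finite_induct)
  case (insert T F)
  have "frontier (\<Union>(insert T F)) \<subseteq> frontier T \<union> frontier (\<Union>F)"
    using frontier_Un_subset[of T "\<Union>F"] by simp
  with insert.IH show ?case by blast
qed simp

lemma small_boundary_open_between:
  fixes \<Delta> :: "'a::metric_space measure set"
  assumes sbp: "small_boundary_property \<Delta>" and \<Delta>: "\<forall>\<mu>\<in>\<Delta>. borel_prob \<mu>"
    and "compact K" "open U" "K \<subseteq> U"
  obtains W where "open W" "K \<subseteq> W" "W \<subseteq> U" "\<And>\<mu>. \<mu> \<in> \<Delta> \<Longrightarrow> measure \<mu> (frontier W) = 0"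
proof -
  define T where "T = {V. open V \<and> V \<subseteq> U \<and> (\<forall>\<mu>\<in>\<Delta>. measure \<mu> (frontier V) = 0)}"
  have cover: "K \<subseteq> \<Union>T"
  proof
    fix x assume "x \<in> K"
    with \<open>K \<subseteq> U\<close> have "x \<in> U" by blast
    then obtain V where "open V" "x \<in> V" "V \<subseteq> U" "\<forall>\<mu>\<in>\<Delta>. measure \<mu> (frontier V) = 0"
      using sbp \<open>open U\<close> unfolding small_boundary_property_def by blast
    then show "x \<in> \<Union>T" unfolding T_def by blast
  qed
  have "\<And>V. V \<in> T \<Longrightarrow> open V" by (simp add: T_def)
  then obtain T' where T': "T' \<subseteq> T" "finite T'" "K \<subseteq> \<Union>T'"
    using compactE[OF \<open>compact K\<close> cover] by metis
  have "measure \<mu> (frontier (\<Union>T')) = 0" if "\<mu> \<in> \<Delta>" for \<mu>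
  proof -
    have \<mu>: "borel_prob \<mu>" using \<Delta> that by blast
    interpret prob_space \<mu> using \<mu> borel_prob_prob_space by blast
    have frontier_sets: "frontier S \<in> sets \<mu>" for S
      using borel_prob_closed_sets[OF \<mu> frontier_closed] .
    have "measure \<mu> (frontier (\<Union>T')) \<le> measure \<mu> (\<Union>V\<in>T'. frontier V)"
      using frontier_finite_Union_subset[OF T'(2)] by (rule finite_measure_mono) (use T'(2) frontier_sets in auto)
    also have "\<dots> \<le> (\<Sum>V\<in>T'. measure \<mu> (frontier V))"
      by (rule measure_UNION_le) (simp_all add: T'(2) frontier_sets)
    also have "\<dots> = 0"
      using T'(1) that by (intro sum.neutral) (auto simp: T_def)
    finally show ?thesis by (simp add: measure_le_0_iff)
  qed
  moreover have "open (\<Union>T')" "\<Union>T' \<subseteq> U" using T'(1) by (auto simp: T_def)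
  ultimately show ?thesis using T'(3) by (intro that) auto
qed

lemma max_infdist_eq_0_imp_frontier:
  assumes "W \<noteq> {}" "- W \<noteq> {}" and "max (infdist y (- W)) (infdist y W) = 0"
  shows "y \<in> frontier W"
proof -
  have "infdist y (- W) = 0" "infdist y W = 0"
    using assms(3) infdist_nonneg[of y W] infdist_nonneg[of y "- W"] by (auto simp: max_def split: if_splits)
  then have "y \<in> closure (- W)" "y \<in> closure W"
    using in_closure_iff_infdist_zero assms(1,2) by blast+
  then show ?thesis by (simp add: frontier_closures)
qed

lemma uniformly_small_near_frontier:
  fixes \<Delta> :: "'a::metric_space measure set"
  assumes cpt: "compact (UNIV :: 'a set)" and \<Delta>: "\<forall>\<mu>\<in>\<Delta>. borel_prob \<mu>"
    and closed: "weak_star_closed \<Delta>" and ultra: "free_ultrafilter \<omega>"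
    and W: "W \<noteq> {}" "- W \<noteq> {}" and null: "\<And>\<mu>. \<mu> \<in> \<Delta> \<Longrightarrow> measure \<mu> (frontier W) = 0"
    and "\<eta> > 0"
  obtains \<kappa> where "\<kappa> > 0" "\<And>\<mu>. \<mu> \<in> \<Delta> \<Longrightarrow> measure \<mu> {y. max (infdist y (- W)) (infdist y W) < \<kappa>} \<le> \<eta>"
proof -
  define d where "d y = max (infdist y (- W)) (infdist y W)" for y
  have d: "continuous_on UNIV d" unfolding d_def by (intro continuous_intros continuous_on_infdist)
  have "0 \<le> d y" for y by (simp add: d_def le_max_iff_disj infdist_nonneg)
  moreover have "\<forall>\<mu>\<in>\<Delta>. measure \<mu> {y. d y = 0} = 0"
  proof
    fix \<mu> assume "\<mu> \<in> \<Delta>"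
    then have \<mu>: "borel_prob \<mu>" using \<Delta> by blast
    interpret prob_space \<mu> using \<mu> borel_prob_prob_space by blast
    have "measure \<mu> {y. d y = 0} \<le> measure \<mu> (frontier W)"
      using max_infdist_eq_0_imp_frontier[OF W] borel_prob_closed_sets[OF \<mu> frontier_closed]
      by (intro finite_measure_mono) (auto simp: d_def)
    then show "measure \<mu> {y. d y = 0} = 0" using null[OF \<open>\<mu> \<in> \<Delta>\<close>] by (simp add: measure_le_0_iff)
  qed
  ultimately obtain \<kappa> where "\<kappa> > 0" "\<forall>\<mu>\<in>\<Delta>. measure \<mu> {y. d y < \<kappa>} \<le> \<eta>"
    using uniformly_small_sublevel_sets[OF cpt \<Delta> closed ultra d _ _ \<open>\<eta> > 0\<close>] by blast
  then show ?thesis using that unfolding d_def by blast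
qed

text \<open>Inside W, where r > -delta, r is pushed up towards max r delta; outside W, where r < 0, it
  is pushed down towards min r (-delta); the weights reach 1 at distance kappa from the other side.\<close>
lemma continuous_push_off_zero:
  fixes r :: "'a::metric_space \<Rightarrow> real"
  assumes r: "continuous_on UNIV r" and "\<delta> > 0" "\<kappa> > 0"
    and nonneg_in: "{y. 0 \<le> r y} \<subseteq> W" and W_above: "W \<subseteq> {y. - \<delta> < r y}"
  obtains c where "continuous_on UNIV c" "\<And>y. \<bar>c y - r y\<bar> \<le> 2 * \<delta>"
    "\<And>y. \<kappa> \<le> max (infdist y (- W)) (infdist y W) \<Longrightarrow> \<delta> \<le> \<bar>c y\<bar>"
proof -
  define up where "up y = min 1 (infdist y (- W) / \<kappa>)" for y
  define down where "down y = min 1 (infdist y W / \<kappa>)" for y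
  define c where "c y = r y + up y * (max (r y) \<delta> - r y) - down y * (r y - min (r y) (- \<delta>))" for y
  have "continuous_on UNIV c"
    unfolding c_def up_def down_def by (intro continuous_intros r continuous_on_infdist) (use \<open>\<kappa> > 0\<close> in auto)
  moreover have "\<bar>c y - r y\<bar> \<le> 2 * \<delta> \<and> (\<kappa> \<le> max (infdist y (- W)) (infdist y W) \<longrightarrow> \<delta> \<le> \<bar>c y\<bar>)" for y
  proof (cases "y \<in> W")
    case True
    then have "down y = 0" and far: "max (infdist y (- W)) (infdist y W) = infdist y (- W)"
      by (simp_all add: down_def infdist_nonneg)
    then have diff: "c y - r y = up y * (max (r y) \<delta> - r y)" by (simp add: c_def)
    have "0 \<le> up y" "up y \<le> 1" using \<open>\<kappa> > 0\<close> by (auto simp: up_def infdist_nonneg)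
    moreover have "0 \<le> max (r y) \<delta> - r y" "max (r y) \<delta> - r y \<le> 2 * \<delta>"
      using True W_above \<open>\<delta> > 0\<close> by (auto simp: max_def)
    ultimately have "\<bar>c y - r y\<bar> \<le> 2 * \<delta>"
      unfolding diff using mult_left_le_one_le[of "max (r y) \<delta> - r y" "up y"] by simp
    moreover have "\<delta> \<le> \<bar>c y\<bar>" if "\<kappa> \<le> max (infdist y (- W)) (infdist y W)"
    proof -
      have "up y = 1" using that far \<open>\<kappa> > 0\<close> by (simp add: up_def)
      then show ?thesis using diff by simp
    qed
    ultimately show ?thesis by blast
  next
    case False
    then have "up y = 0" and far: "max (infdist y (- W)) (infdist y W) = infdist y W"
      by (simp_all add: up_def infdist_nonneg)
    then have diff: "r y - c y = down y * (r y - min (r y) (- \<delta>))" by (simp add: c_def)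
    have "r y < 0"
    proof (rule ccontr)
      assume "\<not> r y < 0"
      then have "y \<in> {y. 0 \<le> r y}" by simp
      with nonneg_in False show False by blast
    qed
    moreover have "0 \<le> down y" "down y \<le> 1" using \<open>\<kappa> > 0\<close> by (auto simp: down_def infdist_nonneg)
    moreover have "0 \<le> r y - min (r y) (- \<delta>)" "r y - min (r y) (- \<delta>) \<le> 2 * \<delta>"
      using \<open>r y < 0\<close> \<open>\<delta> > 0\<close> by (auto simp: min_def)
    ultimately have "0 \<le> r y - c y" "r y - c y \<le> 2 * \<delta>"
      unfolding diff using mult_left_le_one_le[of "r y - min (r y) (- \<delta>)" "down y"] by simp_all
    then have "\<bar>c y - r y\<bar> \<le> 2 * \<delta>" by simp
    moreover have "\<delta> \<le> \<bar>c y\<bar>" if "\<kappa> \<le> max (infdist y (- W)) (infdist y W)"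
    proof -
      have "down y = 1" using that far \<open>\<kappa> > 0\<close> by (simp add: down_def)
      then show ?thesis using diff \<open>\<delta> > 0\<close> by simp
    qed
    ultimately show ?thesis by blast
  qed
  ultimately show ?thesis using that by blast
qed

lemma small_boundary_approx_away_from_zero:
  fixes \<Delta> :: "'a::metric_space measure set" and r :: "'a \<Rightarrow> real"
  assumes cpt: "compact (UNIV :: 'a set)" and \<Delta>: "\<forall>\<mu>\<in>\<Delta>. borel_prob \<mu>"
    and closed: "weak_star_closed \<Delta>" and ultra: "free_ultrafilter \<omega>"
    and sbp: "small_boundary_property \<Delta>" and r: "continuous_on UNIV r"
    and "\<delta> > 0" and "\<eta> > 0"
  obtains c where "continuous_on UNIV c" "\<And>x. \<bar>c x - r x\<bar> \<le> 2 * \<delta>"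
    "\<And>\<mu>. \<mu> \<in> \<Delta> \<Longrightarrow> measure \<mu> {x. \<bar>c x\<bar> < \<delta>} \<le> \<eta>"
proof -
  have "compact {y. 0 \<le> r y}"
    using closed_Collect_le[OF continuous_on_const r] closed_Int_compact[OF _ cpt] by simp
  moreover have "open {y. - \<delta> < r y}" by (intro open_Collect_less continuous_on_const r)
  moreover have "{y. 0 \<le> r y} \<subseteq> {y. - \<delta> < r y}" using \<open>\<delta> > 0\<close> by auto
  ultimately obtain W where "open W" and nonneg_in: "{y. 0 \<le> r y} \<subseteq> W" and W_above: "W \<subseteq> {y. - \<delta> < r y}"
    and null: "\<And>\<mu>. \<mu> \<in> \<Delta> \<Longrightarrow> measure \<mu> (frontier W) = 0"
    using small_boundary_open_between[OF sbp \<Delta>] by metis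
  consider "W = UNIV" | "W = {}" | "W \<noteq> {}" "- W \<noteq> {}" by blast
  then show ?thesis
  proof cases
    case 1
    have "\<bar>max (r x) \<delta> - r x\<bar> \<le> 2 * \<delta>" for x
    proof -
      have "- \<delta> < r x" using W_above 1 by auto
      then show ?thesis using \<open>\<delta> > 0\<close> by (auto simp: max_def)
    qed
    moreover have "{x. \<bar>max (r x) \<delta>\<bar> < \<delta>} = {}" by auto
    then have "measure \<mu> {x. \<bar>max (r x) \<delta>\<bar> < \<delta>} \<le> \<eta>" for \<mu> using \<open>\<eta> > 0\<close> by simp
    moreover have "continuous_on UNIV (\<lambda>x. max (r x) \<delta>)" by (intro continuous_intros r)
    ultimately show ?thesis using that by blast
  next
    case 2
    have "\<bar>min (r x) (- \<delta>) - r x\<bar> \<le> 2 * \<delta>" for x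
    proof -
      have "\<not> 0 \<le> r x" using nonneg_in 2 by blast
      then show ?thesis using \<open>\<delta> > 0\<close> by (auto simp: min_def)
    qed
    moreover have "{x. \<bar>min (r x) (- \<delta>)\<bar> < \<delta>} = {}" by auto
    then have "measure \<mu> {x. \<bar>min (r x) (- \<delta>)\<bar> < \<delta>} \<le> \<eta>" for \<mu> using \<open>\<eta> > 0\<close> by simp
    moreover have "continuous_on UNIV (\<lambda>x. min (r x) (- \<delta>))" by (intro continuous_intros r)
    ultimately show ?thesis using that by blast
  next
    case 3
    define d where "d y = max (infdist y (- W)) (infdist y W)" for y
    have d: "continuous_on UNIV d" unfolding d_def by (intro continuous_intros continuous_on_infdist)
    obtain \<kappa> where "\<kappa> > 0" and small: "\<And>\<mu>. \<mu> \<in> \<Delta> \<Longrightarrow> measure \<mu> {x. d x < \<kappa>} \<le> \<eta>"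
      using uniformly_small_near_frontier[OF cpt \<Delta> closed ultra 3 null \<open>\<eta> > 0\<close>] unfolding d_def by metis
    obtain c where c: "continuous_on UNIV c" "\<And>y. \<bar>c y - r y\<bar> \<le> 2 * \<delta>"
      and away: "\<And>y. \<kappa> \<le> d y \<Longrightarrow> \<delta> \<le> \<bar>c y\<bar>"
      using continuous_push_off_zero[OF r \<open>\<delta> > 0\<close> \<open>\<kappa> > 0\<close> nonneg_in W_above] unfolding d_def by metis
    have "measure \<mu> {x. \<bar>c x\<bar> < \<delta>} \<le> \<eta>" if "\<mu> \<in> \<Delta>" for \<mu>
    proof -
      have \<mu>: "borel_prob \<mu>" using \<Delta> \<open>\<mu> \<in> \<Delta>\<close> by blast
      interpret prob_space \<mu> using \<mu> borel_prob_prob_space by blast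
      have "d x < \<kappa>" if "\<bar>c x\<bar> < \<delta>" for x using away[of x] that by linarith
      then have "{x. \<bar>c x\<bar> < \<delta>} \<subseteq> {x. d x < \<kappa>}" by blast
      then have "measure \<mu> {x. \<bar>c x\<bar> < \<delta>} \<le> measure \<mu> {x. d x < \<kappa>}"
        by (rule finite_measure_mono[OF _ borel_prob_sets_Collect_less[OF \<mu> d]])
      then show ?thesis using small[OF \<open>\<mu> \<in> \<Delta>\<close>] by linarith
    qed
    with c show ?thesis by (rule that)
  qed
qed

section \<open>Small boundary property implies real rank zero\<close>

lemma abs_truncated_inverse_le:
  fixes t \<delta> :: real
  assumes "\<delta> > 0"
  shows "\<bar>t / max (t\<^sup>2) (\<delta>\<^sup>2)\<bar> \<le> 1 / \<delta>"
proof (cases "\<delta> \<le> \<bar>t\<bar>")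
  case True
  then have "max (t\<^sup>2) (\<delta>\<^sup>2) = t\<^sup>2" and "\<bar>t\<bar> > 0"
    using assms abs_le_square_iff[of \<delta> t] by auto
  then have "\<bar>t / max (t\<^sup>2) (\<delta>\<^sup>2)\<bar> = 1 / \<bar>t\<bar>" by (simp add: power2_eq_square abs_mult)
  also have "\<dots> \<le> 1 / \<delta>" using True assms by (simp add: frac_le)
  finally show ?thesis .
next
  case False
  then have "max (t\<^sup>2) (\<delta>\<^sup>2) = \<delta>\<^sup>2"
    using assms abs_le_square_iff[of t \<delta>] by auto
  moreover have "\<bar>t\<bar> / \<delta>\<^sup>2 \<le> \<delta> / \<delta>\<^sup>2" using False by (intro divide_right_mono) auto
  ultimately show ?thesis using assms by (simp add: abs_divide power2_eq_square)
qed

lemma truncated_inverse_defect_le: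
  fixes t \<delta> :: real
  assumes "\<delta> > 0"
  shows "(t * (t / max (t\<^sup>2) (\<delta>\<^sup>2)) - 1)\<^sup>2 \<le> indicator {x. \<bar>x\<bar> < \<delta>} t"
proof (cases "\<delta> \<le> \<bar>t\<bar>")
  case True
  then have "max (t\<^sup>2) (\<delta>\<^sup>2) = t\<^sup>2" and "t \<noteq> 0"
    using assms abs_le_square_iff[of \<delta> t] by auto
  then show ?thesis by (simp add: power2_eq_square)
next
  case False
  have "max (t\<^sup>2) (\<delta>\<^sup>2) > 0" using assms by (simp add: less_max_iff_disj)
  then have "0 \<le> t * (t / max (t\<^sup>2) (\<delta>\<^sup>2))" "t * (t / max (t\<^sup>2) (\<delta>\<^sup>2)) \<le> 1"
    by (simp_all add: power2_eq_square[symmetric] times_divide_eq_right[symmetric])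
  then have "(t * (t / max (t\<^sup>2) (\<delta>\<^sup>2)) - 1)\<^sup>2 \<le> 1"
    by (simp add: abs_square_le_1)
  then show ?thesis using False by simp
qed

lemma quot_invertible_of_real_away_from_zero:
  fixes \<Delta> :: "'a::metric_space measure set" and c :: "nat \<Rightarrow> 'a \<Rightarrow> real"
  assumes cpt: "compact (UNIV::'a set)" and \<Delta>: "\<forall>\<mu>\<in>\<Delta>. borel_prob \<mu>"
    and c: "\<And>n. continuous_on UNIV (c n)" and "\<delta> > 0"
    and small: "\<And>n \<mu>. \<mu> \<in> \<Delta> \<Longrightarrow> measure \<mu> {x. \<bar>c n x\<bar> < \<delta>} \<le> t n"
    and t_nonneg: "\<And>n. 0 \<le> t n" and t: "(t \<longlongrightarrow> 0) \<omega>"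
  shows "quot_invertible (J2 \<omega> \<Delta>) (\<lambda>n x. complex_of_real (c n x))"
proof -
  define b where "b n x = complex_of_real (c n x / max ((c n x)\<^sup>2) (\<delta>\<^sup>2))" for n x
  define e where "e n x = complex_of_real (c n x) * b n x - 1" for n x
  have max_pos: "max ((c n x)\<^sup>2) (\<delta>\<^sup>2) \<noteq> 0" for n x
    using \<open>\<delta> > 0\<close> by (metis max.strict_coboundedI2 power2_eq_square zero_less_mult_iff less_irrefl)
  have b: "continuous_on UNIV (b n)" for n
    unfolding b_def by (intro continuous_intros c) (use max_pos in auto)
  have b_ell: "b \<in> ell_inf"
    by (rule ell_infI[OF b, where B="1 / \<delta>"])
      (simp only: b_def norm_of_real abs_truncated_inverse_le[OF \<open>\<delta> > 0\<close>])
  have e: "continuous_on UNIV (e n)" for n unfolding e_def by (intro continuous_intros b c)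
  have e_eq: "e n x = complex_of_real (c n x * (c n x / max ((c n x)\<^sup>2) (\<delta>\<^sup>2)) - 1)" for n x
    by (simp add: e_def b_def)
  have defect: "(cmod (e n x))\<^sup>2 \<le> indicator {x. \<bar>c n x\<bar> < \<delta>} x" for n x
  proof -
    have "(cmod (e n x))\<^sup>2 \<le> indicator {t. \<bar>t\<bar> < \<delta>} (c n x)"
      unfolding e_eq norm_of_real power2_abs by (rule truncated_inverse_defect_le[OF \<open>\<delta> > 0\<close>])
    then show ?thesis by (simp add: indicator_def)
  qed
  have e_ell: "e \<in> ell_inf"
  proof (rule ell_infI[OF e, where B=1])
    fix n x
    have "indicator {x. \<bar>c n x\<bar> < \<delta>} x \<le> (1::real)" by (simp add: indicator_def)
    then have "(cmod (e n x))\<^sup>2 \<le> 1" using defect[of n x] by linarith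
    then show "cmod (e n x) \<le> 1" by (simp add: abs_square_le_1)
  qed
  have "e \<in> J2 \<omega> \<Delta>"
  proof (rule J2I[OF cpt \<Delta> e_ell _ t])
    fix n
    show "trace_sup \<Delta> (\<lambda>x. (cmod (e n x))\<^sup>2) \<le> t n"
    proof (rule trace_sup_le[OF _ t_nonneg])
      fix \<mu> assume "\<mu> \<in> \<Delta>"
      then have \<mu>: "borel_prob \<mu>" using \<Delta> by blast
      interpret prob_space \<mu> using \<mu> borel_prob_prob_space by blast
      let ?S = "{x. \<bar>c n x\<bar> < \<delta>}"
      have S: "?S \<in> sets \<mu>" by (rule borel_prob_sets_Collect_less[OF \<mu>]) (intro continuous_intros c)
      have "integral\<^sup>L \<mu> (\<lambda>x. (cmod (e n x))\<^sup>2) \<le> integral\<^sup>L \<mu> (indicator ?S)"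
      proof (rule integral_mono)
        show "integrable \<mu> (\<lambda>x. (cmod (e n x))\<^sup>2)"
          by (rule borel_prob_integrable_continuous[OF cpt \<mu>]) (intro continuous_intros e)
        show "integrable \<mu> (indicator ?S :: 'a \<Rightarrow> real)"
          using S by (simp add: emeasure_finite top.not_eq_extremum[symmetric])
      qed (rule defect)
      also have "\<dots> \<le> t n" using S small[OF \<open>\<mu> \<in> \<Delta>\<close>] by simp
      finally show "integral\<^sup>L \<mu> (\<lambda>x. (cmod (e n x))\<^sup>2) \<le> t n" .
    qed
  qed
  then show ?thesis
    unfolding quot_invertible_def e_def using b_ell by (auto simp: mult.commute)
qed

lemma quot_selfadj_imp_imaginary_part_in_J2:
  fixes \<Delta> :: "'a::metric_space measure set"
  assumes cpt: "compact (UNIV::'a set)" and \<Delta>: "\<forall>\<mu>\<in>\<Delta>. borel_prob \<mu>"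
    and a: "a \<in> ell_inf" and selfadj: "quot_selfadj (J2 \<omega> \<Delta>) a"
  shows "(\<lambda>n x. a n x - complex_of_real (Re (a n x))) \<in> J2 \<omega> \<Delta>"
proof (rule J2I[OF cpt \<Delta> _ _ J2_tendsto[OF selfadj[unfolded quot_selfadj_def]]])
  obtain A where A: "\<And>n x. cmod (a n x) \<le> A" using ell_inf_bounded[OF a] by blast
  have "cmod (a n x - complex_of_real (Re (a n x))) \<le> 2 * A" for n x
    using norm_triangle_ineq4[of "a n x" "complex_of_real (Re (a n x))"] A[of n x]
      abs_Re_le_cmod[of "a n x"] by simp
  then show "(\<lambda>n x. a n x - complex_of_real (Re (a n x))) \<in> ell_inf"
    by (intro ell_infI continuous_intros ell_inf_continuous[OF a])
  show "trace_sup \<Delta> (\<lambda>x. (cmod (a n x - complex_of_real (Re (a n x))))\<^sup>2)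
      \<le> trace_sup \<Delta> (\<lambda>x. (cmod (a n x - cnj (a n x)))\<^sup>2)" for n
    by (rule trace_sup_mono[OF cpt \<Delta>])
      (auto intro!: continuous_intros ell_inf_continuous[OF a] simp: cmod_power2)
qed

lemma small_boundary_imp_quot_real_rank_zero:
  fixes \<Delta> :: "'a::metric_space measure set"
  assumes cpt: "compact (UNIV :: 'a set)" and \<Delta>: "\<forall>\<mu>\<in>\<Delta>. borel_prob \<mu>"
    and closed: "weak_star_closed \<Delta>" and ultra: "free_ultrafilter \<omega>"
    and sbp: "small_boundary_property \<Delta>"
  shows "quot_real_rank_zero (J2 \<omega> \<Delta>)"
  unfolding quot_real_rank_zero_def
proof (intro ballI impI allI)
  fix a :: "nat \<Rightarrow> 'a \<Rightarrow> complex" and \<epsilon> :: real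
  assume a: "a \<in> ell_inf" and selfadj: "quot_selfadj (J2 \<omega> \<Delta>) a" and "\<epsilon> > 0"
  obtain A where A: "\<And>n x. cmod (a n x) \<le> A" using ell_inf_bounded[OF a] by blast
  have "\<exists>c. continuous_on UNIV c \<and> (\<forall>x. \<bar>c x - Re (a n x)\<bar> \<le> 2 * (\<epsilon> / 4)) \<and>
      (\<forall>\<mu>\<in>\<Delta>. measure \<mu> {x. \<bar>c x\<bar> < \<epsilon> / 4} \<le> 1 / (real n + 1))" for n
  proof -
    have "continuous_on UNIV (\<lambda>x. Re (a n x))" by (intro continuous_intros ell_inf_continuous[OF a])
    moreover have "\<epsilon> / 4 > 0" "1 / (real n + 1) > 0" using \<open>\<epsilon> > 0\<close> by simp_all
    ultimately show ?thesis
      using small_boundary_approx_away_from_zero[OF cpt \<Delta> closed ultra sbp] by metis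
  qed
  then obtain r where r: "\<And>n. continuous_on UNIV (r n)" and r_close: "\<And>n x. \<bar>r n x - Re (a n x)\<bar> \<le> \<epsilon> / 2"
    and r_small: "\<And>n \<mu>. \<mu> \<in> \<Delta> \<Longrightarrow> measure \<mu> {x. \<bar>r n x\<bar> < \<epsilon> / 4} \<le> 1 / (real n + 1)"
    by (simp add: choice_iff) (metis (full_types))
  define c where "c n x = complex_of_real (r n x)" for n x
  have c_bounded: "cmod (c n x) \<le> A + \<epsilon> / 2" for n x
  proof -
    have "\<bar>r n x\<bar> \<le> A + \<epsilon> / 2"
      using r_close[of n x] abs_Re_le_cmod[of "a n x"] A[of n x] by linarith
    then show ?thesis by (simp add: c_def)
  qed
  then have c_ell: "c \<in> ell_inf" unfolding c_def by (intro ell_infI continuous_intros r)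
  have "quot_selfadj (J2 \<omega> \<Delta>) c" by (simp add: quot_selfadj_def c_def zero_in_J2)
  moreover have "quot_invertible (J2 \<omega> \<Delta>) c"
    unfolding c_def using \<open>\<epsilon> > 0\<close>
    by (intro quot_invertible_of_real_away_from_zero[OF cpt \<Delta> r _ r_small _ free_ultrafilter_tendsto_inverse_Suc[OF ultra]]) auto
  moreover have "quot_norm (J2 \<omega> \<Delta>) (\<lambda>n x. a n x - c n x) < \<epsilon>"
  proof -
    let ?j = "\<lambda>n x. a n x - complex_of_real (Re (a n x))"
      have "cmod (a n x - c n x) \<le> A + (A + \<epsilon> / 2)" for n x
      using norm_triangle_ineq4[of "a n x" "c n x"] A[of n x] c_bounded[of n x] by linarith
    then have "(\<lambda>n x. a n x - c n x) \<in> ell_inf"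
      by (intro ell_infI continuous_intros ell_inf_continuous[OF a] ell_inf_continuous[OF c_ell])
    then have "quot_norm (J2 \<omega> \<Delta>) (\<lambda>n x. a n x - c n x) \<le> ell_norm (\<lambda>n x. (a n x - c n x) - ?j n x)"
      by (rule quot_norm_le[OF _ quot_selfadj_imp_imaginary_part_in_J2[OF cpt \<Delta> a selfadj]])
    also have "\<dots> \<le> \<epsilon> / 2"
      using r_close by (intro ell_norm_le) (simp add: c_def abs_minus_commute flip: of_real_diff)
    finally show ?thesis using \<open>\<epsilon> > 0\<close> by simp
  qed
  ultimately show "\<exists>c\<in>ell_inf. quot_selfadj (J2 \<omega> \<Delta>) c \<and> quot_invertible (J2 \<omega> \<Delta>) c \<and>
      quot_norm (J2 \<omega> \<Delta>) (\<lambda>n x. a n x - c n x) < \<epsilon>"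
    using c_ell by blast
qed

section \<open>Real rank zero implies small boundary property\<close>

lemma sum3_squared_le: "((p::real) + q + r)\<^sup>2 \<le> 3 * (p\<^sup>2 + q\<^sup>2 + r\<^sup>2)"
proof -
  have "0 \<le> (p - q)\<^sup>2 + (q - r)\<^sup>2 + (p - r)\<^sup>2" by simp
  then show ?thesis by (simp add: power2_eq_square algebra_simps)
qed

text \<open>If z b is close to 1 then z is not small; if z is nearly real and Re (z + w) is small,
  then w is not small.\<close>
lemma one_le_defects_of_small_real_part:
  fixes z w b :: complex and B \<delta> :: real
  assumes b: "cmod b \<le> B" "0 < B" and \<delta>: "\<delta> * B = 1 / 2" and small: "\<bar>Re (z + w)\<bar> < \<delta>"
  shows "1 \<le> 12 * (B\<^sup>2 + 1) * ((cmod (z - cnj z))\<^sup>2 + (cmod w)\<^sup>2 + (cmod (z * b - 1))\<^sup>2)"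
proof -
  define u where "u = cmod (z - cnj z)"
  define v where "v = cmod w"
  define e where "e = cmod (z * b - 1)"
  have "0 < \<delta>" using small abs_ge_zero[of "Re (z + w)"] by linarith
  have nonneg: "0 \<le> u" "0 \<le> v" "0 \<le> e" by (simp_all add: u_def v_def e_def)
  have "z - cnj z = complex_of_real (2 * Im z) * \<i>" by (simp add: complex_eq_iff)
  then have "\<bar>Im z\<bar> = u / 2" by (simp add: u_def norm_mult)
  moreover have "\<bar>Re z\<bar> \<le> \<delta> + v"
    using small abs_Re_le_cmod[of w] by (simp add: v_def)
  ultimately have "cmod z \<le> \<delta> + v + u / 2" using cmod_le[of z] by linarith
  have "1 \<le> cmod (z * b) + e" using norm_triangle_ineq4[of "z * b" "z * b - 1"] by (simp add: e_def)
  also have "cmod (z * b) \<le> (\<delta> + v + u / 2) * B"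
    unfolding norm_mult by (rule mult_mono) (use \<open>cmod z \<le> _\<close> b nonneg \<open>0 < \<delta>\<close> in auto)
  also have "(\<delta> + v + u / 2) * B = 1 / 2 + B * v + B * u / 2" using \<delta> by (simp add: algebra_simps)
  finally have "1 / 2 \<le> B * v + B * u + e" using mult_nonneg_nonneg[OF less_imp_le[OF b(2)] nonneg(1)] by linarith
  then have "(1 / 2)\<^sup>2 \<le> (B * v + B * u + e)\<^sup>2" by (rule power_mono) simp
  also have "\<dots> \<le> 3 * ((B * v)\<^sup>2 + (B * u)\<^sup>2 + e\<^sup>2)" by (rule sum3_squared_le)
  also have "(B * v)\<^sup>2 + (B * u)\<^sup>2 + e\<^sup>2 \<le> (B\<^sup>2 + 1) * (u\<^sup>2 + v\<^sup>2 + e\<^sup>2)"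
    by (simp add: power_mult_distrib algebra_simps)
  finally have "1 \<le> 12 * ((B\<^sup>2 + 1) * (u\<^sup>2 + v\<^sup>2 + e\<^sup>2))" by (simp add: power2_eq_square)
  then show ?thesis by (simp only: u_def v_def e_def mult.assoc)
qed

lemma measure_small_real_part_le:
  fixes \<Delta> :: "'a::metric_space measure set" and c j b :: "'a \<Rightarrow> complex"
  assumes cpt: "compact (UNIV :: 'a set)" and \<Delta>: "\<forall>\<mu>\<in>\<Delta>. borel_prob \<mu>" and "\<mu> \<in> \<Delta>"
    and cont: "continuous_on UNIV c" "continuous_on UNIV j" "continuous_on UNIV b"
    and b: "\<And>x. cmod (b x) \<le> B" "0 < B" and \<delta>: "\<delta> * B = 1 / 2"
  shows "measure \<mu> {x. \<bar>Re (c x + j x)\<bar> < \<delta>}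
    \<le> 12 * (B\<^sup>2 + 1) * (trace_sup \<Delta> (\<lambda>x. (cmod (c x - cnj (c x)))\<^sup>2)
        + trace_sup \<Delta> (\<lambda>x. (cmod (j x))\<^sup>2) + trace_sup \<Delta> (\<lambda>x. (cmod (c x * b x - 1))\<^sup>2))"
    (is "_ \<le> ?K * (trace_sup \<Delta> ?U + trace_sup \<Delta> ?V + trace_sup \<Delta> ?E)")
proof -
  have \<mu>: "borel_prob \<mu>" using \<Delta> \<open>\<mu> \<in> \<Delta>\<close> by blast
  interpret prob_space \<mu> using \<mu> borel_prob_prob_space by blast
  have U: "continuous_on UNIV ?U" and V: "continuous_on UNIV ?V" and E: "continuous_on UNIV ?E"
    by (intro continuous_intros cont)+
  note integrable = borel_prob_integrable_continuous[OF cpt \<mu>]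
  have "measure \<mu> {x. \<bar>Re (c x + j x)\<bar> < \<delta>} \<le> integral\<^sup>L \<mu> (\<lambda>x. ?K * (?U x + ?V x + ?E x))"
  proof (rule borel_prob_measure_Collect_le_integral[OF cpt \<mu>])
    show "{x. \<bar>Re (c x + j x)\<bar> < \<delta>} \<in> sets \<mu>"
      by (rule borel_prob_sets_Collect_less[OF \<mu>]) (intro continuous_intros cont)
    show "continuous_on UNIV (\<lambda>x. ?K * (?U x + ?V x + ?E x))" by (intro continuous_intros cont)
    show "1 \<le> ?K * (?U x + ?V x + ?E x)" if "x \<in> {x. \<bar>Re (c x + j x)\<bar> < \<delta>}" for x
      using one_le_defects_of_small_real_part[OF b(1)[of x] b(2) \<delta>] that by simp
  qed simp
  also have "\<dots> = ?K * (integral\<^sup>L \<mu> ?U + integral\<^sup>L \<mu> ?V + integral\<^sup>L \<mu> ?E)"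
    using integrable[OF U] integrable[OF V] integrable[OF E] by simp
  also have "\<dots> \<le> ?K * (trace_sup \<Delta> ?U + trace_sup \<Delta> ?V + trace_sup \<Delta> ?E)"
    by (intro mult_left_mono add_mono integral_le_trace_sup[OF cpt \<Delta> _ \<open>\<mu> \<in> \<Delta>\<close>] U V E) simp
  finally show ?thesis .
qed

lemma quot_real_rank_zero_approx_constant:
  fixes \<Delta> :: "'a::metric_space measure set" and g :: "'a \<Rightarrow> real"
  assumes cpt: "compact (UNIV :: 'a set)" and rr0: "quot_real_rank_zero (J2 \<omega> \<Delta>)"
    and g: "continuous_on UNIV g" and "\<epsilon> > 0"
  obtains c b j where "c \<in> ell_inf" "b \<in> ell_inf" "j \<in> J2 \<omega> \<Delta>"
    "(\<lambda>n x. c n x - cnj (c n x)) \<in> J2 \<omega> \<Delta>" "(\<lambda>n x. c n x * b n x - 1) \<in> J2 \<omega> \<Delta>"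
    "\<And>n x. \<bar>Re (c n x + j n x) - g x\<bar> < \<epsilon>"
proof -
  let ?J = "J2 \<omega> \<Delta>"
  obtain Bg where Bg: "\<And>x. norm (g x) \<le> Bg" using compact_UNIV_continuous_bounded[OF cpt g] by blast
  define a where "a n x = complex_of_real (g x)" for n :: nat and x
  have "a \<in> ell_inf" unfolding a_def by (rule ell_infI[where B=Bg]) (use Bg in \<open>auto intro!: continuous_intros g\<close>)
  moreover have "quot_selfadj ?J a" by (simp add: quot_selfadj_def a_def zero_in_J2)
  ultimately obtain c where c: "c \<in> ell_inf" and c_selfadj: "quot_selfadj ?J c"
    and c_inv: "quot_invertible ?J c" and c_near: "quot_norm ?J (\<lambda>n x. a n x - c n x) < \<epsilon>"
    using rr0 \<open>\<epsilon> > 0\<close> unfolding quot_real_rank_zero_def by blast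
  obtain j where j_J: "j \<in> ?J" and j_close: "ell_norm (\<lambda>n x. (a n x - c n x) - j n x) < \<epsilon>"
    using quot_norm_less_imp[OF c_near] by blast
  obtain b where b: "b \<in> ell_inf" and cb_J: "(\<lambda>n x. c n x * b n x - 1) \<in> ?J"
    using c_inv unfolding quot_invertible_def by blast
  obtain Bc Bj where Bc: "\<And>m y. cmod (c m y) \<le> Bc" and Bj: "\<And>m y. cmod (j m y) \<le> Bj"
    using ell_inf_bounded[OF c] ell_inf_bounded[OF J2_imp_ell_inf[OF j_J]] by metis
  have a_c_j_bounded: "cmod ((a m y - c m y) - j m y) \<le> Bg + Bc + Bj" for m y
    using norm_triangle_ineq4[of "a m y - c m y" "j m y"] norm_triangle_ineq4[of "a m y" "c m y"]
      Bg[of y] Bc[of m y] Bj[of m y] by (simp add: a_def)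
  have "\<bar>Re (c n x + j n x) - g x\<bar> < \<epsilon>" for n x
  proof -
    have "\<bar>Re (c n x + j n x) - g x\<bar> \<le> cmod ((a n x - c n x) - j n x)"
      using abs_Re_le_cmod[of "(a n x - c n x) - j n x"] by (simp add: a_def abs_minus_commute)
    also have "\<dots> \<le> ell_norm (\<lambda>n x. (a n x - c n x) - j n x)"
      by (rule norm_le_ell_norm[OF a_c_j_bounded])
    finally show ?thesis using j_close by linarith
  qed
  with c b j_J c_selfadj[unfolded quot_selfadj_def] cb_J show ?thesis by (rule that)
qed

lemma quot_real_rank_zero_approx_away_from_zero:
  fixes \<Delta> :: "'a::metric_space measure set" and g :: "'a \<Rightarrow> real"
  assumes cpt: "compact (UNIV :: 'a set)" and \<Delta>: "\<forall>\<mu>\<in>\<Delta>. borel_prob \<mu>" and ultra: "free_ultrafilter \<omega>"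
    and rr0: "quot_real_rank_zero (J2 \<omega> \<Delta>)" and g: "continuous_on UNIV g" and "\<epsilon> > 0"
  obtains \<delta> where "\<delta> > 0" and "\<And>\<eta>. \<eta> > 0 \<Longrightarrow> \<exists>g'. continuous_on UNIV g' \<and> (\<forall>x. \<bar>g' x - g x\<bar> < \<epsilon>) \<and>
    (\<forall>\<mu>\<in>\<Delta>. measure \<mu> {x. \<bar>g' x\<bar> < \<delta>} \<le> \<eta>)"
proof -
  obtain c b j where c: "c \<in> ell_inf" and b: "b \<in> ell_inf" and j_J: "j \<in> J2 \<omega> \<Delta>"
    and c_selfadj: "(\<lambda>n x. c n x - cnj (c n x)) \<in> J2 \<omega> \<Delta>" and cb_J: "(\<lambda>n x. c n x * b n x - 1) \<in> J2 \<omega> \<Delta>"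
    and close: "\<And>n x. \<bar>Re (c n x + j n x) - g x\<bar> < \<epsilon>"
    using quot_real_rank_zero_approx_constant[OF cpt rr0 g \<open>\<epsilon> > 0\<close>] by blast
  obtain Bb where Bb: "\<And>n x. cmod (b n x) \<le> Bb" using ell_inf_bounded[OF b] by blast
  define B where "B = \<bar>Bb\<bar> + 1"
  have "0 < B" by (simp add: B_def)
  have b_le: "cmod (b n x) \<le> B" for n x using Bb[of n x] by (simp add: B_def)
  define \<delta> where "\<delta> = 1 / (2 * B)"
  have "\<delta> > 0" "\<delta> * B = 1 / 2" using \<open>0 < B\<close> by (simp_all add: \<delta>_def)
  define defect where "defect n = trace_sup \<Delta> (\<lambda>x. (cmod (c n x - cnj (c n x)))\<^sup>2)
      + trace_sup \<Delta> (\<lambda>x. (cmod (j n x))\<^sup>2) + trace_sup \<Delta> (\<lambda>x. (cmod (c n x * b n x - 1))\<^sup>2)" for n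
  have "(defect \<longlongrightarrow> 0) \<omega>"
    unfolding defect_def using J2_tendsto[OF c_selfadj] J2_tendsto[OF j_J] J2_tendsto[OF cb_J]
    by (intro tendsto_add_zero)
  have "\<exists>g'. continuous_on UNIV g' \<and> (\<forall>x. \<bar>g' x - g x\<bar> < \<epsilon>) \<and> (\<forall>\<mu>\<in>\<Delta>. measure \<mu> {x. \<bar>g' x\<bar> < \<delta>} \<le> \<eta>)"
    if "\<eta> > 0" for \<eta>
  proof -
    have "eventually (\<lambda>n. 12 * (B\<^sup>2 + 1) * defect n < \<eta>) \<omega>"
      using tendsto_mult_right_zero[OF \<open>(defect \<longlongrightarrow> 0) \<omega>\<close>] \<open>\<eta> > 0\<close> by (rule order_tendstoD)
    then obtain n where n: "12 * (B\<^sup>2 + 1) * defect n < \<eta>"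
      using eventually_happens'[OF free_ultrafilter_not_bot[OF ultra]] by blast
    have j: "j \<in> ell_inf" by (rule J2_imp_ell_inf[OF j_J])
    have "measure \<mu> {x. \<bar>Re (c n x + j n x)\<bar> < \<delta>} \<le> \<eta>" if "\<mu> \<in> \<Delta>" for \<mu>
      using measure_small_real_part_le[OF cpt \<Delta> that ell_inf_continuous[OF c, of n] ell_inf_continuous[OF j, of n]
          ell_inf_continuous[OF b, of n] b_le[of n] \<open>0 < B\<close> \<open>\<delta> * B = 1 / 2\<close>] n
      unfolding defect_def by linarith
    moreover have "continuous_on UNIV (\<lambda>x. Re (c n x + j n x))"
      by (intro continuous_intros ell_inf_continuous[OF c] ell_inf_continuous[OF j])
    ultimately show ?thesis using close by blast
  qed
  with \<open>\<delta> > 0\<close> show ?thesis by (rule that)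
qed

lemma halving_tendsto_zero:
  fixes e :: "nat \<Rightarrow> real"
  assumes pos: "\<And>k. 0 < e k" and halving: "\<And>k. 2 * e (Suc k) \<le> e k"
  shows "e \<longlonglongrightarrow> 0"
proof (rule tendsto_sandwich[of "\<lambda>_. 0" _ _ "\<lambda>k. e 0 / 2 ^ k"])
  have "e k \<le> e 0 / 2 ^ k" for k
  proof (induction k)
    case (Suc k)
    have "e (Suc k) \<le> e k / 2" using halving[of k] by simp
    also have "\<dots> \<le> (e 0 / 2 ^ k) / 2" using Suc.IH by (rule divide_right_mono) simp
    finally show ?case by simp
  qed simp
  then show "eventually (\<lambda>k. e k \<le> e 0 / 2 ^ k) sequentially" by simp
  show "eventually (\<lambda>k. 0 \<le> e k) sequentially" using pos by (simp add: less_imp_le)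
  show "(\<lambda>k. e 0 / 2 ^ k) \<longlonglongrightarrow> 0"
    by (intro tendsto_divide_0[OF tendsto_const] filterlim_realpow_sequentially_gt1) simp
qed simp

lemma uniform_limit_of_halving_steps:
  fixes g :: "nat \<Rightarrow> 'a::topological_space \<Rightarrow> real"
  assumes cont: "\<And>k. continuous_on UNIV (g k)" and increment: "\<And>k x. \<bar>g (Suc k) x - g k x\<bar> < e k"
    and pos: "\<And>k. 0 < e k" and halving: "\<And>k. 2 * e (Suc k) \<le> e k"
  obtains G where "continuous_on UNIV G" "\<And>k x. \<bar>G x - g k x\<bar> \<le> 2 * e k"
proof -
  have tail: "\<bar>g m x - g k x\<bar> \<le> 2 * (e k - e m)" if "k \<le> m" for k m x
    using that
  proof (induction m rule: dec_induct)
    case (step m)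
    have "\<bar>g (Suc m) x - g k x\<bar> \<le> \<bar>g (Suc m) x - g m x\<bar> + \<bar>g m x - g k x\<bar>" by linarith
    then show ?case using step.IH increment[of m x] halving[of m] unfolding right_diff_distrib by linarith
  qed simp
  have tail_bound: "\<bar>g m x - g k x\<bar> \<le> 2 * e k" if "k \<le> m" for k m x
    using tail[OF that, of x] pos[of m] unfolding right_diff_distrib by linarith
  have "e \<longlonglongrightarrow> 0" using pos halving by (rule halving_tendsto_zero)
  have small_e: "eventually (\<lambda>k. e k < \<epsilon>) sequentially" if "\<epsilon> > 0" for \<epsilon>
    using order_tendstoD(2)[OF \<open>e \<longlonglongrightarrow> 0\<close> that] .
  have "Cauchy (\<lambda>k. g k x)" for x
  proof (rule metric_CauchyI)
    fix \<epsilon> :: real assume "\<epsilon> > 0"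
    then obtain M where M: "e M < \<epsilon> / 4"
      using small_e[of "\<epsilon> / 4"] by (auto simp: eventually_sequentially)
    have "dist (g m x) (g n x) < \<epsilon>" if "M \<le> m" "M \<le> n" for m n
      using tail_bound[OF that(1), of x] tail_bound[OF that(2), of x] M by (simp add: dist_real_def)
    then show "\<exists>M. \<forall>m\<ge>M. \<forall>n\<ge>M. dist (g m x) (g n x) < \<epsilon>" by blast
  qed
  then have "convergent (\<lambda>k. g k x)" for x by (simp add: Cauchy_convergent_iff)
  then obtain G where G: "\<And>x. (\<lambda>k. g k x) \<longlonglongrightarrow> G x"
    unfolding convergent_def by metis
  have close: "\<bar>G x - g k x\<bar> \<le> 2 * e k" for k x
  proof (rule tendsto_upperbound)
    show "(\<lambda>m. \<bar>g m x - g k x\<bar>) \<longlonglongrightarrow> \<bar>G x - g k x\<bar>" by (intro tendsto_intros G)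
    show "eventually (\<lambda>m. \<bar>g m x - g k x\<bar> \<le> 2 * e k) sequentially"
      by (intro eventually_sequentiallyI[of k] tail_bound)
  qed simp
  have "uniform_limit UNIV g G sequentially"
    unfolding uniform_limit_iff
  proof (intro allI impI)
    fix \<epsilon> :: real assume "\<epsilon> > 0"
    then have "eventually (\<lambda>k. e k < \<epsilon> / 2) sequentially" by (intro small_e) simp
    then show "\<forall>\<^sub>F k in sequentially. \<forall>x\<in>UNIV. dist (g k x) (G x) < \<epsilon>"
    proof (rule eventually_mono)
      fix k assume "e k < \<epsilon> / 2"
      then have "\<bar>G x - g k x\<bar> < \<epsilon>" for x using close[of x k] by linarith
      then show "\<forall>x\<in>UNIV. dist (g k x) (G x) < \<epsilon>" by (simp add: dist_real_def abs_minus_commute)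
    qed
  qed
  with cont have "continuous_on UNIV G"
    by (intro uniform_limit_theorem[where F=sequentially]) simp_all
  then show ?thesis using close by (rule that)
qed

lemma measure_zeros_eq_0_if_close_to_small_sublevels:
  fixes G :: "'a::metric_space \<Rightarrow> real" and h :: "nat \<Rightarrow> 'a \<Rightarrow> real"
  assumes \<mu>: "borel_prob \<mu>" and h: "\<And>k. continuous_on UNIV (h k)"
    and small: "\<And>k. \<exists>\<delta>. (\<forall>x. \<bar>G x - h k x\<bar> < \<delta>) \<and> measure \<mu> {x. \<bar>h k x\<bar> < \<delta>} \<le> t k"
    and t: "t \<longlonglongrightarrow> 0"
  shows "measure \<mu> {x. G x = 0} = 0"
proof -
  interpret prob_space \<mu> using \<mu> borel_prob_prob_space by blast
  have "measure \<mu> {x. G x = 0} \<le> t k" for k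
  proof -
    obtain \<delta> where close: "\<And>x. \<bar>G x - h k x\<bar> < \<delta>" and "measure \<mu> {x. \<bar>h k x\<bar> < \<delta>} \<le> t k"
      using small[of k] by blast
    moreover have "\<bar>h k x\<bar> < \<delta>" if "G x = 0" for x using close[of x] that by simp
    then have "{x. G x = 0} \<subseteq> {x. \<bar>h k x\<bar> < \<delta>}" by blast
    then have "measure \<mu> {x. G x = 0} \<le> measure \<mu> {x. \<bar>h k x\<bar> < \<delta>}"
      by (rule finite_measure_mono[OF _ borel_prob_sets_Collect_less[OF \<mu>]]) (intro continuous_intros h)
    ultimately show ?thesis by linarith
  qed
  with t have "measure \<mu> {x. G x = 0} \<le> 0"
    by (intro LIMSEQ_le_const) (auto intro: exI[of _ 0])
  then show ?thesis by (simp add: measure_le_0_iff)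
qed

lemma quot_real_rank_zero_approx_null_zeros:
  fixes \<Delta> :: "'a::metric_space measure set" and g :: "'a \<Rightarrow> real"
  assumes cpt: "compact (UNIV :: 'a set)" and \<Delta>: "\<forall>\<mu>\<in>\<Delta>. borel_prob \<mu>" and ultra: "free_ultrafilter \<omega>"
    and rr0: "quot_real_rank_zero (J2 \<omega> \<Delta>)" and g: "continuous_on UNIV g" and "\<epsilon> > 0"
  obtains G where "continuous_on UNIV G" "\<And>x. \<bar>G x - g x\<bar> \<le> 2 * \<epsilon>"
    "\<And>\<mu>. \<mu> \<in> \<Delta> \<Longrightarrow> measure \<mu> {x. G x = 0} = 0"
proof -
  define P where "P n ge \<longleftrightarrow> continuous_on UNIV (fst ge) \<and> 0 < snd ge \<and> (n = 0 \<longrightarrow> ge = (g, \<epsilon>))"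
    for n :: nat and ge :: "('a \<Rightarrow> real) \<times> real"
  define Q where "Q n ge ge' \<longleftrightarrow> (\<forall>x. \<bar>fst ge' x - fst ge x\<bar> < snd ge) \<and> 2 * snd ge' \<le> snd ge \<and>
      (\<exists>\<delta>\<ge>4 * snd ge'. \<forall>\<mu>\<in>\<Delta>. measure \<mu> {x. \<bar>fst ge' x\<bar> < \<delta>} \<le> 1 / (real n + 1))"
    for n :: nat and ge ge' :: "('a \<Rightarrow> real) \<times> real"
  have "\<exists>ge'. P (Suc n) ge' \<and> Q n ge ge'" if "P n ge" for n ge
  proof -
    from that have "continuous_on UNIV (fst ge)" "0 < snd ge" by (simp_all add: P_def)
    then obtain \<delta> where "\<delta> > 0" and approx: "\<And>\<eta>. \<eta> > 0 \<Longrightarrow> \<exists>g'. continuous_on UNIV g'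
        \<and> (\<forall>x. \<bar>g' x - fst ge x\<bar> < snd ge) \<and> (\<forall>\<mu>\<in>\<Delta>. measure \<mu> {x. \<bar>g' x\<bar> < \<delta>} \<le> \<eta>)"
      by (rule quot_real_rank_zero_approx_away_from_zero[OF cpt \<Delta> ultra rr0]) blast
    have "1 / (real n + 1) > 0" by simp
    then obtain g' where g': "continuous_on UNIV g'" "\<forall>x. \<bar>g' x - fst ge x\<bar> < snd ge"
      "\<forall>\<mu>\<in>\<Delta>. measure \<mu> {x. \<bar>g' x\<bar> < \<delta>} \<le> 1 / (real n + 1)"
      using approx by blast
    define e' where "e' = min (snd ge / 2) (\<delta> / 4)"
    have "0 < e'" "2 * e' \<le> snd ge" "4 * e' \<le> \<delta>"
      using \<open>0 < snd ge\<close> \<open>\<delta> > 0\<close> by (auto simp: e'_def)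
    then have "P (Suc n) (g', e')" "Q n ge (g', e')"
      using g' unfolding P_def Q_def by auto
    then show ?thesis by blast
  qed
  moreover have "P 0 (g, \<epsilon>)" using g \<open>\<epsilon> > 0\<close> by (simp add: P_def)
  ultimately obtain f where f: "\<And>n. P n (f n)" "\<And>n. Q n (f n) (f (Suc n))"
    using dependent_nat_choice[of P Q] by blast
  define gs where "gs k = fst (f k)" for k
  define es where "es k = snd (f k)" for k
  have start: "gs 0 = g" "es 0 = \<epsilon>" using f(1)[of 0] by (simp_all add: P_def gs_def es_def)
  have gs: "continuous_on UNIV (gs k)" and es: "0 < es k" for k
    using f(1)[of k] by (simp_all add: P_def gs_def es_def)
  have increment: "\<bar>gs (Suc k) x - gs k x\<bar> < es k" and halving: "2 * es (Suc k) \<le> es k"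
    and small: "\<exists>\<delta>\<ge>4 * es (Suc k). \<forall>\<mu>\<in>\<Delta>. measure \<mu> {x. \<bar>gs (Suc k) x\<bar> < \<delta>} \<le> 1 / (real k + 1)"
    for k x using f(2)[of k] by (simp_all add: Q_def gs_def es_def)
  obtain G where G: "continuous_on UNIV G" and close: "\<And>k x. \<bar>G x - gs k x\<bar> \<le> 2 * es k"
    using uniform_limit_of_halving_steps[of gs es, OF gs increment es halving] by blast
  have "measure \<mu> {x. G x = 0} = 0" if "\<mu> \<in> \<Delta>" for \<mu>
  proof (rule measure_zeros_eq_0_if_close_to_small_sublevels)
    show "borel_prob \<mu>" using \<Delta> \<open>\<mu> \<in> \<Delta>\<close> by blast
    show "continuous_on UNIV (gs (Suc k))" for k by (rule gs)
    show "(\<lambda>k. 1 / (real k + 1)) \<longlonglongrightarrow> 0"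
      using LIMSEQ_inverse_real_of_nat by (simp add: inverse_eq_divide add.commute)
    show "\<exists>\<delta>. (\<forall>x. \<bar>G x - gs (Suc k) x\<bar> < \<delta>) \<and> measure \<mu> {x. \<bar>gs (Suc k) x\<bar> < \<delta>} \<le> 1 / (real k + 1)" for k
    proof -
      obtain \<delta> where "4 * es (Suc k) \<le> \<delta>" and "measure \<mu> {x. \<bar>gs (Suc k) x\<bar> < \<delta>} \<le> 1 / (real k + 1)"
        using small[of k] \<open>\<mu> \<in> \<Delta>\<close> by blast
      moreover have "\<bar>G x - gs (Suc k) x\<bar> < \<delta>" for x
        using close[of x "Suc k"] \<open>4 * es (Suc k) \<le> \<delta>\<close> es[of "Suc k"] by linarith
      ultimately show ?thesis by blast
    qed
  qed
  with G close[of _ 0] show ?thesis unfolding start by (rule that)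
qed

text \<open>The sets {G > 0}, for G uniformly close to r/2 - dist x y, are neighbourhoods of x inside
  ball x r whose boundaries lie in the zero set of G.\<close>
lemma small_boundary_propertyI:
  fixes \<Delta> :: "'a::metric_space measure set"
  assumes \<Delta>: "\<forall>\<mu>\<in>\<Delta>. borel_prob \<mu>"
    and approx: "\<And>g (\<epsilon>::real). continuous_on UNIV g \<Longrightarrow> \<epsilon> > 0 \<Longrightarrow> \<exists>G. continuous_on UNIV G
      \<and> (\<forall>x. \<bar>G x - g x\<bar> \<le> \<epsilon>) \<and> (\<forall>\<mu>\<in>\<Delta>. measure \<mu> {x. G x = 0} = 0)"
  shows "small_boundary_property \<Delta>"
  unfolding small_boundary_property_def
proof (intro allI impI, elim conjE)
  fix x0 :: 'a and U :: "'a set"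
  assume "open U" "x0 \<in> U"
  then obtain r where "r > 0" "ball x0 r \<subseteq> U" using open_contains_ball by blast
  have "\<exists>G. continuous_on UNIV G \<and> (\<forall>y. \<bar>G y - (r / 2 - dist x0 y)\<bar> \<le> r / 4)
      \<and> (\<forall>\<mu>\<in>\<Delta>. measure \<mu> {x. G x = 0} = 0)"
    by (rule approx) (use \<open>r > 0\<close> in \<open>auto intro!: continuous_intros\<close>)
  then obtain G where G: "continuous_on UNIV G" and close: "\<And>y. \<bar>G y - (r / 2 - dist x0 y)\<bar> \<le> r / 4"
    and null: "\<forall>\<mu>\<in>\<Delta>. measure \<mu> {x. G x = 0} = 0"
    by blast
  define V where "V = {y. 0 < G y}"
  have "open V" unfolding V_def by (rule open_Collect_less[OF continuous_on_const G])
  moreover have "x0 \<in> V"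
    using close[of x0] \<open>r > 0\<close> abs_le_D2[of "G x0 - r / 2" "r / 4"] by (simp add: V_def)
  moreover have "V \<subseteq> U"
  proof
    fix y assume "y \<in> V"
    then have "dist x0 y < r"
      using abs_le_D1[OF close[of y]] \<open>r > 0\<close> by (simp add: V_def)
    then show "y \<in> U" using \<open>ball x0 r \<subseteq> U\<close> by auto
  qed
  moreover have "measure \<mu> (frontier V) = 0" if "\<mu> \<in> \<Delta>" for \<mu>
  proof -
    have \<mu>: "borel_prob \<mu>" using \<Delta> \<open>\<mu> \<in> \<Delta>\<close> by blast
    interpret prob_space \<mu> using \<mu> borel_prob_prob_space by blast
    have "closure V \<subseteq> {y. 0 \<le> G y}"
      by (rule closure_minimal) (auto simp: V_def intro: closed_Collect_le[OF continuous_on_const G])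
    then have "frontier V \<subseteq> {y. G y = 0}"
      using \<open>open V\<close> by (auto simp: frontier_def interior_open V_def)
    then have "measure \<mu> (frontier V) \<le> measure \<mu> {y. G y = 0}"
      by (rule finite_measure_mono[OF _ borel_prob_sets_Collect_eq[OF \<mu> G]])
    then show ?thesis using null \<open>\<mu> \<in> \<Delta>\<close> by (simp add: measure_le_0_iff)
  qed
  ultimately show "\<exists>V. open V \<and> x0 \<in> V \<and> V \<subseteq> U \<and> (\<forall>\<mu>\<in>\<Delta>. measure \<mu> (frontier V) = 0)"
    by blast
qed

theorem theorem2p12:
  fixes \<Delta> :: "'a::metric_space measure set" and \<omega> :: "nat filter"
  assumes "compact (UNIV :: 'a set)"
    and "\<forall>\<mu>\<in>\<Delta>. borel_prob \<mu>"
    and "weak_star_closed \<Delta>"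
    and "free_ultrafilter \<omega>"
  shows "quot_real_rank_zero (J2 \<omega> \<Delta>) \<longleftrightarrow> small_boundary_property \<Delta>"
proof
  assume rr0: "quot_real_rank_zero (J2 \<omega> \<Delta>)"
  show "small_boundary_property \<Delta>"
  proof (rule small_boundary_propertyI[OF assms(2)])
    fix g :: "'a \<Rightarrow> real" and \<epsilon> :: real
    assume "continuous_on UNIV g" "\<epsilon> > 0"
    then obtain G where "continuous_on UNIV G" "\<And>x. \<bar>G x - g x\<bar> \<le> 2 * (\<epsilon> / 2)"
      "\<And>\<mu>. \<mu> \<in> \<Delta> \<Longrightarrow> measure \<mu> {x. G x = 0} = 0"
      using quot_real_rank_zero_approx_null_zeros[OF assms(1,2,4) rr0, of g "\<epsilon> / 2"] by auto
    then show "\<exists>G. continuous_on UNIV G \<and> (\<forall>x. \<bar>G x - g x\<bar> \<le> \<epsilon>) \<and> (\<forall>\<mu>\<in>\<Delta>. measure \<mu> {x. G x = 0} = 0)"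
      by auto
  qed
next
  assume "small_boundary_property \<Delta>"
  then show "quot_real_rank_zero (J2 \<omega> \<Delta>)"
    by (rule small_boundary_imp_quot_real_rank_zero[OF assms])
qed

end
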